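(* Let $X$ and $Y$ be complex Banach spaces with $Y$ densely and continuously embedded in $X$, let $T>0$, and let $\{A(t)\}_{0\le t\le T}\subset G(X)$ satisfy: (1) $\{A(t)\}$ is stable on $X$; (2) for each $t$, $Y$ is $A(t)$-admissible, and the family of parts of $A(t)$ in $Y$ is stable on $Y$; (3) $Y\subset D(A(t))$ for all $t$, and $t\mapsto A(t)$ is continuous from $[0,T]$ into $B[Y,X]$. Let $\{U(t,s)\}_{0\le s\le t\le T}$ be the evolution operators of $\{A(t)\}$. For $n\in\mathbb N$ put $\Delta=T/n$, $t_j=jT/n$, define the piecewise constant family $A_n(t)=A\big(T[nt/T]/n\big)$ for $0\le t\le T$ (where $[s]$ is the greatest integer $\le s$), and define the approximate evolution operators $U_n(t,s)$ for $s\le t$ by $U_n(t,s)=e^{-(t-s)A}$ whenever $s,t$ lie in one interval $[t_{j-1},t_j]$ on which $A_n\equiv A$, extended to all $0\le s\le t\le T$ by the composition rule $U_n(t,r)=U_n(t,s)U_n(s,r)$ for $r\le s\le t$. Then $\sup_{s\in[0,T]}\|A(s)-A_n(s)\|_{B[Y,X]}\to0$ as $n\to\infty$, and there is a constant $C$ independent of $n$, $t$, $r$ and $g$ such that for all $0\le r<t\le T$ and all $g\in Y$, $$\|U(t,r)g-U_n(t,r)g\|_X\le C\|g\|_Y\,(t-r)\sup_{s\in[0,T]}\|A(s)-A_n(s)\|_{B[Y,X]}.$$ In particular, if $t,r\in[t_{j-1},t_j]$ for some $j$, then $\|U(t,r)g-U_n(t,r)g\|_X=o(\Delta)\,\|g\|_Y$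 as $\Delta\to0$, uniformly in $j$.
   Context: $G(X)$ denotes the set of negative generators of $C_0$-semigroups on $X$, i.e. operators $A$ such that $-A$ generates a $C_0$-semigroup $\{e^{-tA}\}_{t\ge0}$. $B[Y,X]$ is the space of bounded linear operators from $Y$ to $X$ with operator norm. A family $\{A(t)\}_{0\le t\le T}\subset G(X)$ is stable if there are constants $M\ge 1$, $\omega\in\mathbb R$ such that $\big\|\prod_{j=1}^k[A(t_j)+\lambda]^{-1}\big\|\le M(\lambda-\omega)^{-k}$ for all $\lambda>\omega$, all $k$, and all $0\le t_1\le\dots\le t_k\le T$, where the product is time-ordered: $[A(t_\ell)+\lambda]^{-1}$ stands to the left of $[A(t_j)+\lambda]^{-1}$ when $\ell>j$. For $A\in G(X)$, $Y$ is $A$-admissible if $e^{-tA}Y\subset Y$ for all $t\ge0$ and the restrictions $\{e^{-tA}|_Y\}$ form a $C_0$-semigroup on $Y$. Under hypotheses (1)–(3) there is a unique family of bounded operators $U(t,s)$ on $X$, $0\le s\le t\le T$ (the evolution operators), strongly continuous in $(t,s)$, with $U(s,s)=I$, $\|U(t,s)\|_X\le Me^{\omega(t-s)}$, $U(t,r)=U(t,s)U(s,r)$ for $r\le s\le t$, right derivative $[D_t^+U(t,s)g]_{t=s}=-A(s)g$ for $g\in Y$, and $\frac{d}{ds}U(t,s)g=U(t,s)A(s)g$ for $g\in Y$. *)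

theory Defs
  imports "HOL-Analysis.Analysis"
begin

text \<open>Complex Banach spaces: HOL has no class of complex normed spaces, so a complex
Banach space is a real Banach space together with a multiplication by the imaginary
unit (a real-linear map ci with ci (ci x) = -x and norm((a+ib)x) = |a+ib| norm x).
Complex-linear operators are real-linear operators commuting with ci.\<close>

definition complex_structure :: "('a::real_normed_vector \<Rightarrow> 'a) \<Rightarrow> bool" where
  "complex_structure ci \<longleftrightarrow> bounded_linear ci \<and> (\<forall>x. ci (ci x) = - x) \<and>
     (\<forall>a b x. norm (a *\<^sub>R x + b *\<^sub>R ci x) = cmod (Complex a b) * norm x)"

text \<open>C0-semigroup on a Banach space (values at negative times are irrelevant).\<close>

definition C0_semigroup :: "(real \<Rightarrow> 'a::real_normed_vector \<Rightarrow> 'a) \<Rightarrow> bool" where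
  "C0_semigroup S \<longleftrightarrow> (\<forall>t\<ge>0. bounded_linear (S t)) \<and> S 0 = id \<and>
     (\<forall>t\<ge>0. \<forall>s\<ge>0. S (t + s) = S t \<circ> S s) \<and>
     (\<forall>x. continuous_on {0..} (\<lambda>t. S t x))"

text \<open>The (possibly unbounded) operator A with domain D is a negative generator of the
C0-semigroup S, i.e. -A is its infinitesimal generator; thus S t = e^{-tA}.\<close>

definition neg_generator :: "'a set \<Rightarrow> ('a \<Rightarrow> 'a) \<Rightarrow> (real \<Rightarrow> 'a::real_normed_vector \<Rightarrow> 'a) \<Rightarrow> bool" where
  "neg_generator D A S \<longleftrightarrow> C0_semigroup S \<and>
     D = {x. \<exists>l. ((\<lambda>h. (1 / h) *\<^sub>R (S h x - x)) \<longlongrightarrow> l) (at_right 0)} \<and>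
     (\<forall>x\<in>D. ((\<lambda>h. (1 / h) *\<^sub>R (S h x - x)) \<longlongrightarrow> - A x) (at_right 0))"

definition is_resolvent :: "'a set \<Rightarrow> ('a \<Rightarrow> 'a) \<Rightarrow> real \<Rightarrow> ('a::real_normed_vector \<Rightarrow> 'a) \<Rightarrow> bool" where
  "is_resolvent D A lam R \<longleftrightarrow> bounded_linear R \<and>
     (\<forall>x. R x \<in> D \<and> A (R x) + lam *\<^sub>R R x = x) \<and>
     (\<forall>x\<in>D. R (A x + lam *\<^sub>R x) = x)"

definition resolvent :: "'a set \<Rightarrow> ('a \<Rightarrow> 'a) \<Rightarrow> real \<Rightarrow> ('a::real_normed_vector \<Rightarrow> 'a)" where
  "resolvent D A lam = (THE R. is_resolvent D A lam R)"

text \<open>Time-ordered product over a nondecreasing list [t_1,...,t_k]: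
[A(t_k)+\<lambda>]^{-1} \<circ> ... \<circ> [A(t_1)+\<lambda>]^{-1}.\<close>

definition res_prod :: "(real \<Rightarrow> 'a set) \<Rightarrow> (real \<Rightarrow> 'a \<Rightarrow> 'a) \<Rightarrow> real \<Rightarrow> real list \<Rightarrow> ('a::real_normed_vector \<Rightarrow> 'a)" where
  "res_prod D A lam ts = fold (\<lambda>t f. resolvent (D t) (A t) lam \<circ> f) ts id"

definition stable :: "real \<Rightarrow> (real \<Rightarrow> 'a::real_normed_vector set) \<Rightarrow> (real \<Rightarrow> 'a \<Rightarrow> 'a) \<Rightarrow> bool" where
  "stable T D A \<longleftrightarrow> (\<exists>M \<omega>. M \<ge> 1 \<and>
     (\<forall>lam>\<omega>. \<forall>t\<in>{0..T}. \<exists>R. is_resolvent (D t) (A t) lam R) \<and>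
     (\<forall>lam>\<omega>. \<forall>ts. sorted ts \<and> set ts \<subseteq> {0..T} \<longrightarrow>
        onorm (res_prod D A lam ts) \<le> M / (lam - \<omega>) ^ length ts))"

text \<open>Part in Y of an operator (D, A) on X, Y embedded into X by J.\<close>

definition part_dom :: "('y \<Rightarrow> 'x) \<Rightarrow> 'x set \<Rightarrow> ('x \<Rightarrow> 'x) \<Rightarrow> 'y set" where
  "part_dom J D A = {y. J y \<in> D \<and> A (J y) \<in> range J}"

definition part_op :: "('y \<Rightarrow> 'x) \<Rightarrow> ('x \<Rightarrow> 'x) \<Rightarrow> 'y \<Rightarrow> 'y" where
  "part_op J A y = inv J (A (J y))"

definition admissible :: "('y::real_normed_vector \<Rightarrow> 'x) \<Rightarrow> (real \<Rightarrow> 'x \<Rightarrow> 'x) \<Rightarrow> bool" where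
  "admissible J S \<longleftrightarrow> (\<exists>SY. C0_semigroup SY \<and> (\<forall>t\<ge>0. \<forall>y. J (SY t y) = S t (J y)))"

definition grid :: "real \<Rightarrow> nat \<Rightarrow> nat \<Rightarrow> real" where
  "grid T n m = real m * T / real n"

definition Aapp :: "real \<Rightarrow> (real \<Rightarrow> 'x \<Rightarrow> 'x) \<Rightarrow> nat \<Rightarrow> real \<Rightarrow> 'x \<Rightarrow> 'x" where
  "Aapp T A n t = A (T * real_of_int \<lfloor>real n * t / T\<rfloor> / real n)"

text \<open>Approximate evolution operator U_n(t,s), s \<le> t: the time-ordered composition
over the grid intervals [t_m, t_{m+1}] of e^{-\<ell>_m A(t_m)}, with \<ell>_m the length of
[s,t] \<inter> [t_m,t_{m+1}] (factors with \<ell>_m = 0 are the identity).  On a single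
grid interval this is e^{-(t-s)A(t_{j-1})}, and it satisfies the composition rule.\<close>

definition Uapp :: "real \<Rightarrow> (real \<Rightarrow> real \<Rightarrow> 'x \<Rightarrow> 'x) \<Rightarrow> nat \<Rightarrow> real \<Rightarrow> real \<Rightarrow> 'x \<Rightarrow> 'x" where
  "Uapp T S n t s = fold (\<lambda>m f. S (grid T n m)
       (max 0 (min t (grid T n (Suc m)) - max s (grid T n m))) \<circ> f) [0..<n] id"

definition dist_AAn :: "real \<Rightarrow> ('y::real_normed_vector \<Rightarrow> 'x::real_normed_vector) \<Rightarrow> (real \<Rightarrow> 'x \<Rightarrow> 'x) \<Rightarrow> nat \<Rightarrow> real" where
  "dist_AAn T J A n = (SUP s\<in>{0..T}. onorm (\<lambda>y. A s (J y) - Aapp T A n s (J y)))"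

end

theory Submission
  imports Defs
begin

text \<open>On a grid interval \<open>[t\<^sub>j\<^sub>-\<^sub>1, t\<^sub>j]\<close> the approximate evolution is the semigroup of the
  frozen operator \<open>A\<^sub>n(s) = A(t\<^sub>j\<^sub>-\<^sub>1)\<close>, so \<open>s \<mapsto> U(t, s) U\<^sub>n(s, r) g\<close> has derivative
  \<open>U(t, s) (A(s) - A\<^sub>n(s)) U\<^sub>n(s, r) g\<close>, and the mean value inequality gives the estimate with
  \<open>C\<close> the product of the bounds of \<open>U\<close> on \<open>X\<close> and of \<open>U\<^sub>n\<close> on \<open>Y\<close>. The substance is that
  \<open>U\<^sub>n\<close> is bounded on \<open>Y\<close> uniformly in \<open>n\<close>: stability of the parts of \<open>A(t)\<close> in \<open>Y\<close> bounds
  time-ordered products of resolvents, and Kato's argument passes to time-ordered products of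
  the semigroups, each factor \<open>exp (-d A)\<close> being the limit of the implicit Euler products
  \<open>(1 + A/m)^-\<lfloor>m d\<rfloor>\<close> (the exponential formula). Finally \<open>sup\<^sub>s \<parallel>A(s) - A\<^sub>n(s)\<parallel> \<rightarrow> 0\<close>
  by uniform continuity of \<open>A\<close> in \<open>B[Y, X]\<close>, which also gives the \<open>o(\<Delta>)\<close> bound on a single
  grid interval.\<close>

lemma has_vector_derivative_iff_tendsto_quotient:
  fixes f :: "real \<Rightarrow> 'a::real_normed_vector"
  shows "(f has_vector_derivative d) (at x within s) \<longleftrightarrow>
         ((\<lambda>y. (1 / (y - x)) *\<^sub>R (f y - f x)) \<longlongrightarrow> d) (at x within s)"
proof -
  have "\<forall>\<^sub>F y in at x within s. norm ((f y - f x) - (y - x) *\<^sub>R d) / norm (y - x)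
       = norm ((1 / (y - x)) *\<^sub>R (f y - f x) - d)"
  proof (rule eventually_mono[of "\<lambda>y. y \<noteq> x"])
    show "\<forall>\<^sub>F y in at x within s. y \<noteq> x" by (simp add: eventually_at_filter)
    fix y :: real assume "y \<noteq> x"
    then have "(f y - f x) - (y - x) *\<^sub>R d = (y - x) *\<^sub>R ((1 / (y - x)) *\<^sub>R (f y - f x) - d)"
      by (simp add: algebra_simps)
    then show "norm ((f y - f x) - (y - x) *\<^sub>R d) / norm (y - x)
       = norm ((1 / (y - x)) *\<^sub>R (f y - f x) - d)"
      using \<open>y \<noteq> x\<close> by simp
  qed
  then have "((\<lambda>y. norm ((f y - f x) - (y - x) *\<^sub>R d) / norm (y - x)) \<longlongrightarrow> 0) (at x within s)
      \<longleftrightarrow> ((\<lambda>y. norm ((1 / (y - x)) *\<^sub>R (f y - f x) - d)) \<longlongrightarrow> 0) (at x within s)"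
    by (rule tendsto_cong)
  then show ?thesis
    unfolding has_vector_derivative_def has_derivative_iff_norm
    by (simp add: bounded_linear_scaleR_left tendsto_norm_zero_iff LIM_zero_iff)
qed

lemma tendsto_apply_uniformly_bounded:
  fixes T :: "'c \<Rightarrow> 'a::real_normed_vector \<Rightarrow> 'b::real_normed_vector"
  assumes bounded: "\<forall>\<^sub>F h in F. bounded_linear (T h) \<and> (\<forall>x. norm (T h x) \<le> K * norm x)"
    and strong: "((\<lambda>h. T h v) \<longlongrightarrow> w) F" and q: "(q \<longlongrightarrow> v) F"
  shows "((\<lambda>h. T h (q h)) \<longlongrightarrow> w) F"
proof -
  have "((\<lambda>h. T h (q h - v)) \<longlongrightarrow> 0) F"
  proof (rule Lim_null_comparison)
    show "\<forall>\<^sub>F h in F. norm (T h (q h - v)) \<le> K * norm (q h - v)"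
      using bounded by eventually_elim simp
    have "((\<lambda>h. q h - v) \<longlongrightarrow> 0) F" using q by (simp add: LIM_zero_iff)
    from tendsto_mult_right_zero[OF tendsto_norm_zero[OF this]]
    show "((\<lambda>h. K * norm (q h - v)) \<longlongrightarrow> 0) F" .
  qed
  from tendsto_add[OF this strong] have "((\<lambda>h. T h (q h - v) + T h v) \<longlongrightarrow> w) F" by simp
  moreover have "\<forall>\<^sub>F h in F. T h (q h - v) + T h v = T h (q h)"
  proof (rule eventually_mono[OF bounded])
    fix h assume "bounded_linear (T h) \<and> (\<forall>x. norm (T h x) \<le> K * norm x)"
    then interpret L: bounded_linear "T h" by blast
    show "T h (q h - v) + T h v = T h (q h)" by (simp add: L.diff)
  qed
  ultimately show ?thesis by (simp add: tendsto_cong)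
qed

lemma bounded_linear_bound_of_ball:
  fixes f :: "'a::real_normed_vector \<Rightarrow> 'b::real_normed_vector"
  assumes lin: "bounded_linear f" and r: "r > 0"
    and ball: "\<And>x. x \<in> ball x0 r \<Longrightarrow> norm (f x) \<le> c"
  shows "norm (f x) \<le> (4 * c / r) * norm x"
proof (cases "x = 0")
  case True
  then show ?thesis using linear_0[OF bounded_linear.linear[OF lin]] by simp
next
  case False
  interpret L: bounded_linear f by (rule lin)
  define k where "k = r / (2 * norm x)"
  have k: "k > 0" using False r by (simp add: k_def)
  have "norm (k *\<^sub>R x) = r / 2" using False r by (simp add: k_def)
  then have "norm (f (x0 + k *\<^sub>R x)) \<le> c" using r by (intro ball) (simp add: dist_norm)
  moreover have "norm (f x0) \<le> c" using r by (intro ball) simp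
  ultimately have "k * norm (f x) \<le> 2 * c"
    using norm_triangle_ineq4[of "f (x0 + k *\<^sub>R x)" "f x0"] k by (simp add: L.add L.scale)
  then have "norm (f x) \<le> 2 * c / k" using k by (simp add: field_simps)
  also have "\<dots> = (4 * c / r) * norm x" using False r by (simp add: k_def field_simps)
  finally show ?thesis .
qed

lemma uniform_boundedness:
  fixes T :: "'i \<Rightarrow> 'a::banach \<Rightarrow> 'b::real_normed_vector"
  assumes lin: "\<And>i. i \<in> I \<Longrightarrow> bounded_linear (T i)"
    and pointwise: "\<And>x. \<exists>B. \<forall>i\<in>I. norm (T i x) \<le> B"
  shows "\<exists>K. \<forall>i\<in>I. \<forall>x. norm (T i x) \<le> K * norm x"
proof -
  define E where "E n = {x. \<forall>i\<in>I. norm (T i x) \<le> real n}" for n :: nat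
  have "closed (E n)" for n
  proof -
    have "closed {x. norm (T i x) \<le> real n}" if "i \<in> I" for i
      using lin[OF that] by (intro closed_Collect_le continuous_intros) (auto intro: linear_continuous_on)
    then show ?thesis by (auto simp: E_def Collect_ball_eq)
  qed
  moreover have "(\<Union>n. E n) = UNIV"
  proof safe
    fix x
    obtain B where B: "\<forall>i\<in>I. norm (T i x) \<le> B" using pointwise by blast
    obtain n where "B \<le> real n" using real_arch_simple by blast
    then have "x \<in> E n" using B by (auto simp: E_def)
    then show "x \<in> (\<Union>n. E n)" by blast
  qed auto
  ultimately have "\<exists>n. interior (E n) \<noteq> {}"
    using Baire_category_alt[of euclidean "range E"]
    by (auto simp: completely_metrizable_space_euclidean)
  then obtain n r x0 where "r > 0" "ball x0 r \<subseteq> E n"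
    by (meson all_not_in_conv open_contains_ball_eq open_interior interior_subset subset_trans)
  then have "\<forall>i\<in>I. \<forall>x. norm (T i x) \<le> (4 * real n / r) * norm x"
  proof (intro ballI allI)
    fix i x assume "i \<in> I"
    show "norm (T i x) \<le> (4 * real n / r) * norm x"
      by (rule bounded_linear_bound_of_ball[OF lin[OF \<open>i \<in> I\<close>] \<open>r > 0\<close>])
        (use \<open>ball x0 r \<subseteq> E n\<close> \<open>i \<in> I\<close> in \<open>auto simp: E_def\<close>)
  qed
  then show ?thesis by blast
qed

lemma vector_derivative_bound_Icc:
  fixes f :: "real \<Rightarrow> 'a::real_normed_vector"
  assumes ab: "a \<le> b" and cont: "continuous_on {a..b} f"
    and deriv: "\<And>x. a < x \<Longrightarrow> x < b \<Longrightarrow> (f has_vector_derivative f' x) (at x within {a..b})"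
    and bound: "\<And>x. a < x \<Longrightarrow> x < b \<Longrightarrow> norm (f' x) \<le> B"
  shows "norm (f b - f a) \<le> B * (b - a)"
proof (cases "a = b")
  case False
  then have "a < b" using ab by simp
  have "norm (f b - f a) \<le> B * b - B * a"
  proof (rule differentiable_bound_general[OF \<open>a < b\<close> cont, of "\<lambda>x. B * x" f' "\<lambda>x. B"])
    fix x assume x: "a < x" "x < b"
    then show "(f has_vector_derivative f' x) (at x)"
      using deriv[OF x] at_within_interior[of x "{a..b}"] by simp
    show "((\<lambda>x. B * x) has_vector_derivative B) (at x)"
      by (auto intro!: derivative_eq_intros simp: has_vector_derivative_def)
    show "norm (f' x) \<le> B" using bound[OF x] .
  qed (intro continuous_intros)
  then show ?thesis by (simp add: algebra_simps)
qed simp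

lemma has_vector_derivative_apply_operator_family:
  fixes U :: "real \<Rightarrow> 'a::real_normed_vector \<Rightarrow> 'b::real_normed_vector" and w :: "real \<Rightarrow> 'a"
  assumes lin: "\<And>s'. s' \<in> X \<Longrightarrow> bounded_linear (U s')"
    and bound: "\<And>s' x. s' \<in> X \<Longrightarrow> norm (U s' x) \<le> K * norm x"
    and cont: "((\<lambda>s'. U s' w') \<longlongrightarrow> U s w') (at s within X)"
    and dU: "((\<lambda>s'. U s' (w s)) has_vector_derivative d) (at s within X)"
    and dw: "(w has_vector_derivative w') (at s within X)"
  shows "((\<lambda>s'. U s' (w s')) has_vector_derivative d + U s w') (at s within X)"
proof -
  let ?qw = "\<lambda>s'. (1 / (s' - s)) *\<^sub>R (w s' - w s)"
  let ?qU = "\<lambda>s'. (1 / (s' - s)) *\<^sub>R (U s' (w s) - U s (w s))"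
  have inX: "\<forall>\<^sub>F s' in at s within X. s' \<in> X" by (simp add: eventually_at_filter)
  have qw: "(?qw \<longlongrightarrow> w') (at s within X)"
    using dw unfolding has_vector_derivative_iff_tendsto_quotient .
  have "((\<lambda>s'. U s' (?qw s')) \<longlongrightarrow> U s w') (at s within X)"
  proof (rule tendsto_apply_uniformly_bounded[where T = U, OF _ cont qw])
    show "\<forall>\<^sub>F s' in at s within X. bounded_linear (U s') \<and> (\<forall>x. norm (U s' x) \<le> K * norm x)"
      using inX by eventually_elim (simp add: lin bound)
  qed
  then have "((\<lambda>s'. ?qU s' + U s' (?qw s')) \<longlongrightarrow> d + U s w') (at s within X)"
    using dU unfolding has_vector_derivative_iff_tendsto_quotient by (intro tendsto_add)
  moreover have "\<forall>\<^sub>F s' in at s within X.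
      ?qU s' + U s' (?qw s') = (1 / (s' - s)) *\<^sub>R (U s' (w s') - U s (w s))"
    using inX
  proof eventually_elim
    case (elim s')
    interpret L: bounded_linear "U s'" using lin[OF elim] .
    show ?case by (simp add: L.diff L.scale scaleR_diff_right)
  qed
  ultimately show ?thesis
    unfolding has_vector_derivative_iff_tendsto_quotient by (simp add: tendsto_cong)
qed

lemma tendsto_floor_mult_div:
  assumes "\<sigma> \<ge> 0"
  shows "(\<lambda>n. real (nat \<lfloor>real n * \<sigma>\<rfloor>) / real n) \<longlonglongrightarrow> \<sigma>"
proof -
  have "(\<lambda>n. real (nat \<lfloor>real n * \<sigma>\<rfloor>) / real n - \<sigma>) \<longlonglongrightarrow> 0"
  proof (rule Lim_null_comparison)
    show "\<forall>\<^sub>F n in sequentially. norm (real (nat \<lfloor>real n * \<sigma>\<rfloor>) / real n - \<sigma>) \<le> 1 / real n"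
      using eventually_gt_at_top[of 0]
    proof eventually_elim
      case (elim n)
      have np: "real n > 0" using elim by simp
      have "real (nat \<lfloor>real n * \<sigma>\<rfloor>) \<le> real n * \<sigma>" using assms by simp
      then have le: "real (nat \<lfloor>real n * \<sigma>\<rfloor>) / real n \<le> \<sigma>" using np by (simp add: field_simps)
      have "real n * \<sigma> - 1 < real (nat \<lfloor>real n * \<sigma>\<rfloor>)" using assms by simp
      then have "(real n * \<sigma> - 1) / real n < real (nat \<lfloor>real n * \<sigma>\<rfloor>) / real n"
        using np by (intro divide_strict_right_mono) auto
      then have "\<sigma> - 1 / real n < real (nat \<lfloor>real n * \<sigma>\<rfloor>) / real n"
        using np by (simp add: diff_divide_distrib)
      then show ?case using le by simp
    qed
  qed (rule lim_1_over_n)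
  then show ?thesis by (simp add: LIM_zero_iff)
qed

lemma tendsto_of_dense_uniformly_bounded:
  fixes T :: "nat \<Rightarrow> 'a::real_normed_vector \<Rightarrow> 'b::real_normed_vector"
  assumes dense: "closure E = UNIV"
    and bounded: "\<forall>\<^sub>F n in sequentially. bounded_linear (T n) \<and> (\<forall>x. norm (T n x) \<le> L * norm x)"
    and lin: "bounded_linear S" and conv: "\<And>x. x \<in> E \<Longrightarrow> (\<lambda>n. T n x) \<longlonglongrightarrow> S x"
  shows "(\<lambda>n. T n w) \<longlonglongrightarrow> S w"
  unfolding tendsto_iff
proof (intro allI impI)
  fix \<epsilon> :: real assume "\<epsilon> > 0"
  interpret S: bounded_linear S by (rule lin)
  obtain K where K: "K > 0" "\<And>x. norm (S x) \<le> norm x * K" using S.pos_bounded by blast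
  define \<delta> where "\<delta> = \<epsilon> / (3 * (\<bar>L\<bar> + K))"
  have "\<delta> > 0" using \<open>\<epsilon> > 0\<close> K by (simp add: \<delta>_def add_pos_nonneg)
  have "w \<in> closure E" using dense by simp
  then obtain w' where "w' \<in> E" "dist w' w < \<delta>"
    using \<open>\<delta> > 0\<close> unfolding closure_approachable by blast
  then have "norm (w - w') < \<delta>" by (simp add: dist_norm norm_minus_commute)
  have "\<forall>\<^sub>F n in sequentially. dist (T n w') (S w') < \<epsilon> / 3"
    using conv[OF \<open>w' \<in> E\<close>] \<open>\<epsilon> > 0\<close> unfolding tendsto_iff by (meson divide_pos_pos zero_less_numeral)
  then show "\<forall>\<^sub>F n in sequentially. dist (T n w) (S w) < \<epsilon>"
    using bounded
  proof eventually_elim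
    case (elim n)
    interpret Tn: bounded_linear "T n" using elim by blast
    have "T n w - S w = T n (w - w') + (T n w' - S w') + S (w' - w)"
      by (simp add: Tn.diff S.diff)
    then have "norm (T n w - S w) \<le> norm (T n (w - w')) + norm (T n w' - S w') + norm (S (w' - w))"
      by (simp only:) (rule order_trans[OF norm_triangle_ineq add_right_mono[OF norm_triangle_ineq]])
    also have "\<dots> \<le> L * norm (w - w') + \<epsilon> / 3 + K * norm (w - w')"
    proof -
      have "norm (T n (w - w')) \<le> L * norm (w - w')" using elim by blast
      moreover have "norm (S (w' - w)) \<le> K * norm (w - w')"
        using K(2)[of "w' - w"] by (simp add: norm_minus_commute mult.commute)
      ultimately show ?thesis using elim(1) by (simp add: dist_norm)
    qed
    also have "\<dots> \<le> (\<bar>L\<bar> + K) * norm (w - w') + \<epsilon> / 3"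
      by (simp add: algebra_simps mult_right_mono)
    also have "\<dots> \<le> (\<bar>L\<bar> + K) * \<delta> + \<epsilon> / 3"
      using \<open>norm (w - w') < \<delta>\<close> K by (intro add_right_mono mult_left_mono) auto
    also have "(\<bar>L\<bar> + K) * \<delta> = \<epsilon> / 3" proof -
      have "\<bar>L\<bar> + K > 0" using K(1) by simp
      then show ?thesis by (simp add: \<delta>_def field_simps)
    qed
    finally show ?case using \<open>\<epsilon> > 0\<close> by (simp add: dist_norm)
  qed
qed

lemma eventually_at_right_0_pos: "\<forall>\<^sub>F h in at_right (0::real). h > 0"
  by (simp add: eventually_at_right_less)

lemma tendsto_integral_average_at_right:
  fixes f :: "real \<Rightarrow> 'a::banach"
  assumes "continuous_on {p..b} f" "p < b"
  shows "((\<lambda>d. (1 / d) *\<^sub>R integral {p..p + d} f) \<longlongrightarrow> f p) (at_right 0)"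
proof -
  have "((\<lambda>u. integral {p..u} f) has_vector_derivative f p) (at p within {p..b})"
    using integral_has_vector_derivative[OF assms(1)] assms(2) by auto
  then have "((\<lambda>u. (1 / (u - p)) *\<^sub>R integral {p..u} f) \<longlongrightarrow> f p) (at_right p)"
    unfolding has_vector_derivative_iff_tendsto_quotient at_within_Icc_at_right[OF assms(2)] by simp
  then show ?thesis unfolding filterlim_at_right_to_0[of _ _ p] by (simp add: add.commute)
qed

lemma inverse_one_minus_le_exp:
  fixes x :: real
  assumes "0 \<le> x" "x \<le> 1/2"
  shows "1 / (1 - x) \<le> exp (2 * x)"
proof -
  have "0 \<le> x * (1 - 2 * x)" using assms by simp
  then have "1 / (1 - x) \<le> 1 + 2 * x" using assms by (simp add: field_simps algebra_simps)
  also have "\<dots> \<le> exp (2 * x)" using exp_ge_add_one_self[of "2 * x"] by simp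
  finally show ?thesis .
qed

lemma power_ratio_le_exp:
  fixes m w :: real
  assumes "w > 0" "m \<ge> 2 * w"
  shows "(m / (m - w)) ^ k \<le> exp (2 * w * real k / m)"
proof -
  have "m / (m - w) = 1 / (1 - w / m)" using assms by (simp add: field_simps)
  also have "\<dots> \<le> exp (2 * (w / m))"
    by (rule inverse_one_minus_le_exp) (use assms in \<open>auto simp: field_simps\<close>)
  finally have "(m / (m - w)) ^ k \<le> exp (2 * (w / m)) ^ k"
    by (rule power_mono) (use assms in simp)
  also have "\<dots> = exp (2 * w * real k / m)" by (simp add: exp_of_nat_mult[symmetric] field_simps)
  finally show ?thesis .
qed

lemma funpow_scaleR_linear:
  fixes R :: "'a::real_vector \<Rightarrow> 'a"
  assumes "linear R"
  shows "((\<lambda>x. c *\<^sub>R R x) ^^ k) x = (c ^ k) *\<^sub>R (R ^^ k) x"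
  by (induction k arbitrary: x) (simp_all add: linear_scale[OF assms])

lemma fold_compose_replicate:
  "fold (\<lambda>t f. R t \<circ> f) (replicate k \<tau>) f0 = (R \<tau> ^^ k) \<circ> f0"
  by (induction k arbitrary: f0) (auto simp: funpow_Suc_right comp_assoc simp del: funpow.simps)

lemma bounded_linear_fold_compose:
  assumes "\<forall>t\<in>set ts. bounded_linear (R t)" "bounded_linear f0"
  shows "bounded_linear (fold (\<lambda>t f. R t \<circ> f) ts f0)"
  using assms by (induction ts arbitrary: f0) (auto intro: bounded_linear_compose simp: o_def)

section \<open>C0-semigroups and their generators\<close>

lemma C0_semigroupD:
  assumes "C0_semigroup S"
  shows "\<And>t. t \<ge> 0 \<Longrightarrow> bounded_linear (S t)" "S 0 = id"
    "\<And>t s. t \<ge> 0 \<Longrightarrow> s \<ge> 0 \<Longrightarrow> S (t + s) x = S t (S s x)"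
    "\<And>x. continuous_on {0..} (\<lambda>t. S t x)"
  using assms unfolding C0_semigroup_def by auto

lemma C0_semigroup_commute:
  assumes "C0_semigroup S" "t \<ge> 0" "s \<ge> 0"
  shows "S t (S s x) = S s (S t x)"
  using C0_semigroupD(3)[OF assms(1)] assms(2,3) by (metis add.commute)

lemma C0_semigroup_continuous_on:
  assumes "C0_semigroup S" "a \<ge> 0"
  shows "continuous_on {a..b} (\<lambda>t. S t x)"
  using assms by (auto intro: continuous_on_subset[OF C0_semigroupD(4)])

lemma C0_semigroup_bounded_on_Icc:
  fixes S :: "real \<Rightarrow> 'a::banach \<Rightarrow> 'a"
  assumes "C0_semigroup S"
  shows "\<exists>K\<ge>0. \<forall>t\<in>{0..c}. \<forall>x. norm (S t x) \<le> K * norm x"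
proof -
  have "\<exists>K. \<forall>t\<in>{0..c}. \<forall>x. norm (S t x) \<le> K * norm x"
  proof (rule uniform_boundedness)
    show "\<And>t. t \<in> {0..c} \<Longrightarrow> bounded_linear (S t)" using C0_semigroupD(1)[OF assms] by auto
    fix x
    have "compact ((\<lambda>t. S t x) ` {0..c})"
      by (intro compact_continuous_image C0_semigroup_continuous_on assms) auto
    then show "\<exists>B. \<forall>t\<in>{0..c}. norm (S t x) \<le> B"
      by (meson compact_imp_bounded bounded_iff imageI)
  qed
  then obtain K where "\<forall>t\<in>{0..c}. \<forall>x. norm (S t x) \<le> K * norm x" by blast
  then have "\<forall>t\<in>{0..c}. \<forall>x. norm (S t x) \<le> max K 0 * norm x"
    by (meson max.cobounded1 mult_right_mono norm_ge_zero order_trans)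
  then show ?thesis by (intro exI[of _ "max K 0"]) auto
qed

definition semigroup_quotient :: "(real \<Rightarrow> 'a::real_normed_vector \<Rightarrow> 'a) \<Rightarrow> 'a \<Rightarrow> real \<Rightarrow> 'a" where
  "semigroup_quotient S x h = (1 / h) *\<^sub>R (S h x - x)"

lemma neg_generator_tendsto:
  assumes "neg_generator D A S" "x \<in> D"
  shows "(semigroup_quotient S x \<longlongrightarrow> - A x) (at_right 0)"
  using assms unfolding neg_generator_def semigroup_quotient_def by auto

lemma neg_generator_domainI:
  assumes g: "neg_generator D A S" and lim: "(semigroup_quotient S x \<longlongrightarrow> l) (at_right 0)"
  shows "x \<in> D" "A x = - l"
proof -
  show x: "x \<in> D" using assms unfolding neg_generator_def semigroup_quotient_def by auto
  from tendsto_unique[OF _ neg_generator_tendsto[OF g x] lim] show "A x = - l"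
    by (simp add: minus_equation_iff)
qed

lemma neg_generator_C0_semigroup: "neg_generator D A S \<Longrightarrow> C0_semigroup S"
  unfolding neg_generator_def by simp

lemma neg_generator_diff:
  assumes g: "neg_generator D A S" and "x \<in> D" "y \<in> D"
  shows "x - y \<in> D" "A (x - y) = A x - A y"
proof -
  have lin: "h \<ge> 0 \<Longrightarrow> linear (S h)" for h
    using C0_semigroupD(1)[OF neg_generator_C0_semigroup[OF g]] bounded_linear.linear by blast
  have "\<forall>\<^sub>F h in at_right 0. semigroup_quotient S (x - y) h = semigroup_quotient S x h - semigroup_quotient S y h"
    using eventually_at_right_0_pos
    by eventually_elim (simp add: semigroup_quotient_def linear_diff[OF lin] algebra_simps)
  moreover have "((\<lambda>h. semigroup_quotient S x h - semigroup_quotient S y h) \<longlongrightarrow> - A x - - A y) (at_right 0)"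
    by (intro tendsto_diff neg_generator_tendsto[OF g] assms(2,3))
  ultimately have "(semigroup_quotient S (x - y) \<longlongrightarrow> - (A x - A y)) (at_right 0)"
    by (simp add: tendsto_cong)
  from neg_generator_domainI[OF g this] show "x - y \<in> D" "A (x - y) = A x - A y" by auto
qed

lemma neg_generator_scaleR:
  assumes g: "neg_generator D A S" and "x \<in> D"
  shows "c *\<^sub>R x \<in> D" "A (c *\<^sub>R x) = c *\<^sub>R A x"
proof -
  have lin: "h \<ge> 0 \<Longrightarrow> linear (S h)" for h
    using C0_semigroupD(1)[OF neg_generator_C0_semigroup[OF g]] bounded_linear.linear by blast
  have "\<forall>\<^sub>F h in at_right 0. semigroup_quotient S (c *\<^sub>R x) h = c *\<^sub>R semigroup_quotient S x h"
    using eventually_at_right_0_pos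
    by eventually_elim (simp add: semigroup_quotient_def linear_scale[OF lin] algebra_simps)
  moreover have "((\<lambda>h. c *\<^sub>R semigroup_quotient S x h) \<longlongrightarrow> c *\<^sub>R - A x) (at_right 0)"
    by (intro tendsto_scaleR tendsto_const neg_generator_tendsto[OF g] assms(2))
  ultimately have "(semigroup_quotient S (c *\<^sub>R x) \<longlongrightarrow> - (c *\<^sub>R A x)) (at_right 0)"
    by (simp add: tendsto_cong)
  from neg_generator_domainI[OF g this] show "c *\<^sub>R x \<in> D" "A (c *\<^sub>R x) = c *\<^sub>R A x" by auto
qed

lemma neg_generator_invariant:
  assumes g: "neg_generator D A S" and x: "x \<in> D" and t: "t \<ge> 0"
  shows "S t x \<in> D" "A (S t x) = S t (A x)"
proof -
  have C: "C0_semigroup S" using neg_generator_C0_semigroup[OF g] .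
  interpret L: bounded_linear "S t" using C0_semigroupD(1)[OF C t] .
  have "\<forall>\<^sub>F h in at_right 0. semigroup_quotient S (S t x) h = S t (semigroup_quotient S x h)"
    using eventually_at_right_0_pos
    by eventually_elim (simp add: semigroup_quotient_def L.scale L.diff C0_semigroup_commute[OF C _ t])
  moreover have "((\<lambda>h. S t (semigroup_quotient S x h)) \<longlongrightarrow> S t (- A x)) (at_right 0)"
    by (intro L.tendsto neg_generator_tendsto[OF g x])
  ultimately have "(semigroup_quotient S (S t x) \<longlongrightarrow> - S t (A x)) (at_right 0)"
    by (simp add: tendsto_cong L.neg)
  from neg_generator_domainI[OF g this] show "S t x \<in> D" "A (S t x) = S t (A x)" by auto
qed

text \<open>Admissibility only provides the restricted semigroup, so its generator has to be constructed.\<close>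

definition generator_domain :: "(real \<Rightarrow> 'a::real_normed_vector \<Rightarrow> 'a) \<Rightarrow> 'a set" where
  "generator_domain S = {x. \<exists>l. (semigroup_quotient S x \<longlongrightarrow> l) (at_right 0)}"

definition neg_generator_of :: "(real \<Rightarrow> 'a::real_normed_vector \<Rightarrow> 'a) \<Rightarrow> 'a \<Rightarrow> 'a" where
  "neg_generator_of S x = - Lim (at_right 0) (semigroup_quotient S x)"

lemma neg_generator_neg_generator_of:
  assumes "C0_semigroup S"
  shows "neg_generator (generator_domain S) (neg_generator_of S) S"
  unfolding neg_generator_def
proof (intro conjI ballI)
  show "C0_semigroup S" by fact
  show "generator_domain S = {x. \<exists>l. ((\<lambda>h. (1 / h) *\<^sub>R (S h x - x)) \<longlongrightarrow> l) (at_right 0)}"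
    by (simp add: generator_domain_def semigroup_quotient_def[abs_def])
  fix x assume "x \<in> generator_domain S"
  then obtain l where l: "(semigroup_quotient S x \<longlongrightarrow> l) (at_right 0)"
    by (auto simp: generator_domain_def)
  then have "Lim (at_right 0) (semigroup_quotient S x) = l" by (intro tendsto_Lim) simp_all
  then show "((\<lambda>h. (1 / h) *\<^sub>R (S h x - x)) \<longlongrightarrow> - neg_generator_of S x) (at_right 0)"
    using l by (simp add: neg_generator_of_def semigroup_quotient_def[abs_def])
qed

lemma neg_generator_orbit_tendsto_right:
  assumes g: "neg_generator D A S" and x: "x \<in> D" and t: "t \<ge> 0"
  shows "((\<lambda>y. (1 / (y - t)) *\<^sub>R (S y x - S t x)) \<longlongrightarrow> - S t (A x)) (at t within {t..})"
proof -
  have C: "C0_semigroup S" using neg_generator_C0_semigroup[OF g] .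
  interpret L: bounded_linear "S t" using C0_semigroupD(1)[OF C t] .
  have "\<forall>\<^sub>F h in at_right 0. (1 / (h + t - t)) *\<^sub>R (S (h + t) x - S t x) = S t (semigroup_quotient S x h)"
    using eventually_at_right_0_pos
  proof eventually_elim
    case (elim h)
    then have "S (h + t) x = S t (S h x)" using C0_semigroupD(3)[OF C t, of h x] by (simp add: add.commute)
    then show ?case by (simp add: semigroup_quotient_def L.scale L.diff)
  qed
  moreover have "((\<lambda>h. S t (semigroup_quotient S x h)) \<longlongrightarrow> - S t (A x)) (at_right 0)"
    using L.tendsto[OF neg_generator_tendsto[OF g x]] by (simp add: L.neg)
  ultimately have "((\<lambda>h. (1 / (h + t - t)) *\<^sub>R (S (h + t) x - S t x)) \<longlongrightarrow> - S t (A x)) (at_right 0)"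
    by (simp add: tendsto_cong)
  then show ?thesis unfolding at_within_Ici_at_right filterlim_at_right_to_0[of _ _ t] .
qed

lemma neg_generator_orbit_tendsto_left:
  fixes S :: "real \<Rightarrow> 'a::banach \<Rightarrow> 'a"
  assumes g: "neg_generator D A S" and x: "x \<in> D" and t: "t > 0"
  shows "((\<lambda>y. (1 / (y - t)) *\<^sub>R (S y x - S t x)) \<longlongrightarrow> - S t (A x)) (at_left t)"
proof -
  have C: "C0_semigroup S" using neg_generator_C0_semigroup[OF g] .
  interpret L: bounded_linear "S t" using C0_semigroupD(1)[OF C] t by simp
  obtain K where K: "\<forall>s\<in>{0..t}. \<forall>y. norm (S s y) \<le> K * norm y"
    using C0_semigroup_bounded_on_Icc[OF C] by blast
  have ev: "\<forall>\<^sub>F h in at_right 0. 0 < h \<and> h < t"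
    using t by (simp add: eventually_at_right_field) (metis)
  have shift: "filterlim (\<lambda>h. t - h) (at t within {0..}) (at_right 0)"
    unfolding filterlim_at
  proof
    show "\<forall>\<^sub>F h in at_right 0. t - h \<in> {0..} \<and> t - h \<noteq> t"
      using ev by eventually_elim auto
    show "((\<lambda>h. t - h) \<longlongrightarrow> t) (at_right 0)" by (auto intro!: tendsto_eq_intros)
  qed
  have "((\<lambda>s. S s (- A x)) \<longlongrightarrow> S t (- A x)) (at t within {0..})"
    using C0_semigroupD(4)[OF C, of "- A x"] t by (auto simp: continuous_on_def)
  from filterlim_compose[OF this shift]
  have strong: "((\<lambda>h. S (t - h) (- A x)) \<longlongrightarrow> S t (- A x)) (at_right 0)" .
  text \<open>The semigroup is only strongly continuous, but it is uniformly bounded on \<open>[0, t]\<close>.\<close>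
  have "((\<lambda>h. S (t - h) (semigroup_quotient S x h)) \<longlongrightarrow> S t (- A x)) (at_right 0)"
  proof (rule tendsto_apply_uniformly_bounded[where T = "\<lambda>h. S (t - h)",
        OF _ strong neg_generator_tendsto[OF g x]])
    show "\<forall>\<^sub>F h in at_right 0. bounded_linear (S (t - h)) \<and> (\<forall>y. norm (S (t - h) y) \<le> K * norm y)"
      using ev by eventually_elim (use C0_semigroupD(1)[OF C] K in auto)
  qed
  moreover have "\<forall>\<^sub>F h in at_right 0. S (t - h) (semigroup_quotient S x h)
      = (1 / (t - h - t)) *\<^sub>R (S (t - h) x - S t x)"
    using ev
  proof eventually_elim
    case (elim h)
    interpret Lh: bounded_linear "S (t - h)" using C0_semigroupD(1)[OF C] elim by simp
    show ?case
      using C0_semigroupD(3)[OF C, of "t - h" h x] elim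
      by (simp add: semigroup_quotient_def Lh.scale Lh.diff algebra_simps)
  qed
  ultimately have "((\<lambda>h. (1 / (t - h - t)) *\<^sub>R (S (t - h) x - S t x)) \<longlongrightarrow> - S t (A x)) (at_right 0)"
    by (simp add: tendsto_cong L.neg)
  then show ?thesis
    unfolding filterlim_at_left_to_right filterlim_at_right_to_0[of _ _ "-t"] by simp
qed

lemma neg_generator_orbit_derivative:
  fixes S :: "real \<Rightarrow> 'a::banach \<Rightarrow> 'a"
  assumes g: "neg_generator D A S" and x: "x \<in> D" and t: "t \<in> {a..b}" and a: "a \<ge> 0"
  shows "((\<lambda>s. S s x) has_vector_derivative - S t (A x)) (at t within {a..b})"
proof -
  have "((\<lambda>y. (1 / (y - t)) *\<^sub>R (S y x - S t x)) \<longlongrightarrow> - S t (A x)) (at t within {0..<t} \<union> {t..})"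
  proof (rule iffD2[OF Lim_within_Un], rule conjI)
    show "((\<lambda>y. (1 / (y - t)) *\<^sub>R (S y x - S t x)) \<longlongrightarrow> - S t (A x)) (at t within {0..<t})"
    proof (cases "t = 0")
      case False
      then have "t > 0" using t a by simp
      show ?thesis
        by (rule tendsto_within_subset[OF neg_generator_orbit_tendsto_left[OF g x \<open>t > 0\<close>]]) auto
    qed simp
  qed (use neg_generator_orbit_tendsto_right[OF g x] t a in simp)
  then have "((\<lambda>s. S s x) has_vector_derivative - S t (A x)) (at t within {0..<t} \<union> {t..})"
    by (simp add: has_vector_derivative_iff_tendsto_quotient)
  then show ?thesis by (rule has_vector_derivative_within_subset) (use t a in auto)
qed

lemma neg_generator_shifted_orbit_derivative:
  fixes S :: "real \<Rightarrow> 'a::banach \<Rightarrow> 'a"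
  assumes g: "neg_generator D A S" and z: "z \<in> D" and s: "s \<in> {a..b}"
  shows "((\<lambda>s. S (s - a) z) has_vector_derivative - A (S (s - a) z)) (at s within {a..b})"
proof -
  have "((\<lambda>s. s - a) has_vector_derivative 1) (at s within {a..b})"
    by (auto intro!: derivative_eq_intros simp: has_real_derivative_iff_has_vector_derivative[symmetric])
  moreover have "((\<lambda>\<tau>. S \<tau> z) has_vector_derivative - S (s - a) (A z)) (at (s - a) within (\<lambda>s. s - a) ` {a..b})"
    using s by (intro has_vector_derivative_within_subset[OF neg_generator_orbit_derivative[OF g z,
          of "s - a" 0 "b - a"]]) auto
  ultimately have "((\<lambda>s. S (s - a) z) has_vector_derivative 1 *\<^sub>R (- S (s - a) (A z))) (at s within {a..b})"
    using vector_diff_chain_within[of "\<lambda>s. s - a" 1 s "{a..b}" "\<lambda>\<tau>. S \<tau> z"] by (simp add: o_def)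
  then show ?thesis using neg_generator_invariant(2)[OF g z, of "s - a"] s by simp
qed

definition semigroup_average :: "(real \<Rightarrow> 'a::banach \<Rightarrow> 'a) \<Rightarrow> real \<Rightarrow> 'a \<Rightarrow> 'a" where
  "semigroup_average S h z = (1 / h) *\<^sub>R integral {0..h} (\<lambda>t. S t z)"

lemma semigroup_average_tendsto:
  assumes "C0_semigroup S"
  shows "((\<lambda>h. semigroup_average S h z) \<longlongrightarrow> z) (at_right 0)"
  using tendsto_integral_average_at_right[OF C0_semigroup_continuous_on[OF assms order_refl], of 1 z]
  by (simp add: semigroup_average_def C0_semigroupD(2)[OF assms])

lemma semigroup_shift_integral:
  fixes S :: "real \<Rightarrow> 'a::banach \<Rightarrow> 'a"
  assumes C: "C0_semigroup S" and h: "h > 0" and d: "d > 0"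
  shows "S d (integral {0..h} (\<lambda>t. S t z)) - integral {0..h} (\<lambda>t. S t z)
       = integral {h..h + d} (\<lambda>t. S t z) - integral {0..d} (\<lambda>t. S t z)"
proof -
  define f where "f t = S t z" for t
  have int: "f integrable_on {a..b}" if "a \<ge> 0" for a b
    unfolding f_def by (rule integrable_continuous_real[OF C0_semigroup_continuous_on[OF C that]])
  interpret L: bounded_linear "S d" using C0_semigroupD(1)[OF C] d by simp
  have "S d (integral {0..h} f) = integral {0..h} (S d \<circ> f)"
    using integral_linear[OF int[of 0 h] L.bounded_linear] by simp
  also have "\<dots> = integral {0..h} (f \<circ> (+) d)"
    using C0_semigroupD(3)[OF C] d by (intro integral_cong) (simp add: f_def)
  also have "\<dots> = integral {0 + d..h + d} f"
    by (rule integral_shift_Icc_real)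
  finally have shift: "S d (integral {0..h} f) = integral {d..h + d} f" by simp
  have "integral {0..d} f + integral {d..h + d} f = integral {0..h + d} f"
    using h d int[of 0 "h + d"] by (intro Henstock_Kurzweil_Integration.integral_combine) simp_all
  then have right: "integral {d..h + d} f = integral {0..h + d} f - integral {0..d} f"
    by (metis add_diff_cancel_left')
  have "integral {0..h} f + integral {h..h + d} f = integral {0..h + d} f"
    using h d int[of 0 "h + d"] by (intro Henstock_Kurzweil_Integration.integral_combine) simp_all
  then have left: "integral {0..h} f = integral {0..h + d} f - integral {h..h + d} f"
    by (metis add_diff_cancel)
  show ?thesis
    unfolding f_def[symmetric] by (simp only: shift, simp only: right left) (simp add: algebra_simps)
qed

lemma neg_generator_semigroup_average:
  fixes S :: "real \<Rightarrow> 'a::banach \<Rightarrow> 'a"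
  assumes g: "neg_generator D A S" and h: "h > 0"
  shows "semigroup_average S h z \<in> D" "A (semigroup_average S h z) = (1 / h) *\<^sub>R (z - S h z)"
proof -
  have C: "C0_semigroup S" using neg_generator_C0_semigroup[OF g] .
  define f where "f t = S t z" for t
  have cont: "continuous_on {a..b} f" if "a \<ge> 0" for a b
    unfolding f_def using C0_semigroup_continuous_on[OF C that] .
  have "\<forall>\<^sub>F d in at_right 0. semigroup_quotient S (semigroup_average S h z) d
      = (1 / h) *\<^sub>R ((1 / d) *\<^sub>R integral {h..h + d} f - (1 / d) *\<^sub>R integral {0..0 + d} f)"
    using eventually_at_right_0_pos
  proof eventually_elim
    case (elim d)
    interpret L: bounded_linear "S d" using C0_semigroupD(1)[OF C] elim by simp
    have "semigroup_quotient S (semigroup_average S h z) d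
        = (1 / d) *\<^sub>R ((1 / h) *\<^sub>R (S d (integral {0..h} f) - integral {0..h} f))"
      unfolding semigroup_quotient_def semigroup_average_def f_def by (simp add: L.scale scaleR_diff_right)
    then show ?case
      using semigroup_shift_integral[OF C h elim, of z] unfolding f_def[symmetric]
      by (simp add: scaleR_diff_right mult.commute)
  qed
  moreover have "((\<lambda>d. (1 / h) *\<^sub>R ((1 / d) *\<^sub>R integral {h..h + d} f - (1 / d) *\<^sub>R integral {0..0 + d} f))
      \<longlongrightarrow> (1 / h) *\<^sub>R (f h - f 0)) (at_right 0)"
    using h by (intro tendsto_scaleR tendsto_const tendsto_diff
        tendsto_integral_average_at_right[OF cont, of h "h + 1"]
        tendsto_integral_average_at_right[OF cont, of 0 1]) auto
  ultimately have "(semigroup_quotient S (semigroup_average S h z) \<longlongrightarrow> (1 / h) *\<^sub>R (f h - f 0)) (at_right 0)"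
    by (simp add: tendsto_cong)
  from neg_generator_domainI[OF g this]
  show "semigroup_average S h z \<in> D" "A (semigroup_average S h z) = (1 / h) *\<^sub>R (z - S h z)"
    using C0_semigroupD(2)[OF C] by (auto simp: f_def algebra_simps)
qed

lemma neg_generator_dense_domain_square:
  fixes S :: "real \<Rightarrow> 'a::banach \<Rightarrow> 'a"
  assumes g: "neg_generator D A S"
  shows "closure {x \<in> D. A x \<in> D} = UNIV"
proof -
  have C: "C0_semigroup S" using neg_generator_C0_semigroup[OF g] .
  have nontriv: "at_right (0::real) \<noteq> bot" by simp
  text \<open>Averages of orbits lie in \<open>D\<close>, and in \<open>{x \<in> D. A x \<in> D}\<close> when started in \<open>D\<close>.\<close>
  have in_D2: "D \<subseteq> closure {x \<in> D. A x \<in> D}"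
  proof
    fix z assume z: "z \<in> D"
    have "\<forall>\<^sub>F h in at_right 0. semigroup_average S h z \<in> closure {x \<in> D. A x \<in> D}"
      using eventually_at_right_0_pos
    proof eventually_elim
      case (elim h)
      have "S h z \<in> D" using neg_generator_invariant(1)[OF g z] elim by simp
      then have "z - S h z \<in> D" by (rule neg_generator_diff(1)[OF g z])
      then have "(1 / h) *\<^sub>R (z - S h z) \<in> D" by (rule neg_generator_scaleR(1)[OF g])
      then have "semigroup_average S h z \<in> {x \<in> D. A x \<in> D}"
        using neg_generator_semigroup_average[OF g elim] by simp
      then show ?case by (rule subsetD[OF closure_subset])
    qed
    from Lim_in_closed_set[OF closed_closure this nontriv semigroup_average_tendsto[OF C]]
    show "z \<in> closure {x \<in> D. A x \<in> D}" .
  qed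
  have "z \<in> closure D" for z
  proof -
    have "\<forall>\<^sub>F h in at_right 0. semigroup_average S h z \<in> closure D"
      using eventually_at_right_0_pos
      by eventually_elim (rule subsetD[OF closure_subset neg_generator_semigroup_average(1)[OF g]])
    from Lim_in_closed_set[OF closed_closure this nontriv semigroup_average_tendsto[OF C]]
    show ?thesis .
  qed
  moreover have "closure D \<subseteq> closure {x \<in> D. A x \<in> D}"
    by (rule closure_minimal[OF in_D2 closed_closure])
  ultimately show ?thesis by blast
qed

lemma neg_generator_orbit_increment_bound:
  fixes S :: "real \<Rightarrow> 'a::banach \<Rightarrow> 'a"
  assumes g: "neg_generator D A S" and x: "x \<in> D"
    and K: "\<forall>s\<in>{0..c}. \<forall>y. norm (S s y) \<le> K * norm y" and t: "0 \<le> t" "t \<le> c"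
  shows "norm (S t x - x) \<le> K * norm (A x) * t"
proof -
  have C: "C0_semigroup S" using neg_generator_C0_semigroup[OF g] .
  have "norm (S t x - S 0 x) \<le> (K * norm (A x)) * (t - 0)"
  proof (rule vector_derivative_bound_Icc[OF t(1) C0_semigroup_continuous_on[OF C order_refl]])
    fix s assume s: "0 < s" "s < t"
    show "((\<lambda>s. S s x) has_vector_derivative - S s (A x)) (at s within {0..t})"
      using neg_generator_orbit_derivative[OF g x] s by simp
    show "norm (- S s (A x)) \<le> K * norm (A x)" using K s t by auto
  qed
  then show ?thesis using C0_semigroupD(2)[OF C] by simp
qed

section \<open>The exponential formula\<close>

lemma neg_generator_second_order_bound:
  fixes S :: "real \<Rightarrow> 'a::banach \<Rightarrow> 'a"
  assumes g: "neg_generator D A S" and v: "v \<in> D" "A v \<in> D"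
    and K: "K \<ge> 0" "\<forall>s\<in>{0..c}. \<forall>y. norm (S s y) \<le> K * norm y" and h: "0 \<le> h" "h \<le> c"
  shows "norm (S h v - v + h *\<^sub>R A v) \<le> K * norm (A (A v)) * h\<^sup>2"
proof -
  have C: "C0_semigroup S" using neg_generator_C0_semigroup[OF g] .
  have "norm ((S h v + h *\<^sub>R A v) - (S 0 v + 0 *\<^sub>R A v)) \<le> (K * norm (A (A v)) * h) * (h - 0)"
  proof (rule vector_derivative_bound_Icc[where f'="\<lambda>t. - S t (A v) + A v"])
    show "continuous_on {0..h} (\<lambda>t. S t v + t *\<^sub>R A v)"
      by (intro continuous_intros C0_semigroup_continuous_on[OF C]) simp
    fix t assume t: "0 < t" "t < h"
    have "((\<lambda>t. t *\<^sub>R A v) has_vector_derivative A v) (at t within {0..h})"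
      unfolding has_vector_derivative_def
      by (rule bounded_linear_imp_has_derivative[OF bounded_linear_scaleR_left])
    then show "((\<lambda>t. S t v + t *\<^sub>R A v) has_vector_derivative - S t (A v) + A v) (at t within {0..h})"
      using t by (intro has_vector_derivative_add neg_generator_orbit_derivative[OF g v(1)]) auto
    have "norm (S t (A v) - A v) \<le> K * norm (A (A v)) * t"
      by (rule neg_generator_orbit_increment_bound[OF g v(2) K(2)]) (use t h in auto)
    also have "\<dots> \<le> K * norm (A (A v)) * h"
      using t K(1) by (intro mult_left_mono) auto
    finally show "norm (- S t (A v) + A v) \<le> K * norm (A (A v)) * h" by (simp add: norm_minus_commute)
  qed (use h in simp)
  then show ?thesis using C0_semigroupD(2)[OF C] by (simp add: power2_eq_square algebra_simps)
qed

text \<open>\<open>R m\<close> plays the role of \<open>(A + m)\<^sup>-\<^sup>1\<close>; only its left-inverse property on \<open>D\<close> is used.\<close>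

locale hille_yosida_generator =
  fixes S :: "real \<Rightarrow> 'a::banach \<Rightarrow> 'a" and D A and R :: "real \<Rightarrow> 'a \<Rightarrow> 'a" and \<omega> M :: real
  assumes generator: "neg_generator D A S" and omega_pos: "\<omega> > 0" and M_nonneg: "M \<ge> 0"
    and resolvent_linear: "\<And>m. m > \<omega> \<Longrightarrow> bounded_linear (R m)"
    and resolvent_left_inverse: "\<And>m v. m > \<omega> \<Longrightarrow> v \<in> D \<Longrightarrow> R m (A v + m *\<^sub>R v) = v"
    and resolvent_power_bound: "\<And>m k x. m > \<omega> \<Longrightarrow> norm ((R m ^^ k) x) \<le> M / (m - \<omega>) ^ k * norm x"
begin

definition euler_step :: "real \<Rightarrow> 'a \<Rightarrow> 'a" where
  "euler_step m x = m *\<^sub>R R m x"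

lemma C0_semigroup: "C0_semigroup S"
  using neg_generator_C0_semigroup[OF generator] .

lemma bounded_linear_euler_step_power: "m > \<omega> \<Longrightarrow> bounded_linear (euler_step m ^^ k)"
proof (induction k)
  case (Suc k)
  have "bounded_linear (euler_step m)"
    unfolding euler_step_def[abs_def]
    using bounded_linear_compose[OF bounded_linear_scaleR_right resolvent_linear[OF Suc.prems]] by simp
  then show ?case using Suc by (simp add: bounded_linear_compose funpow_Suc_right del: funpow.simps)
qed (simp add: bounded_linear_ident[unfolded id_def] id_def)

lemma euler_step_power_bound:
  assumes m: "m \<ge> 2 * \<omega>" and k: "real k \<le> m * c"
  shows "norm ((euler_step m ^^ k) x) \<le> M * exp (2 * \<omega> * c) * norm x"
proof -
  have mw: "m > \<omega>" using m omega_pos by simp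
  have "(euler_step m ^^ k) x = (m ^ k) *\<^sub>R (R m ^^ k) x"
    unfolding euler_step_def[abs_def]
    by (rule funpow_scaleR_linear[OF bounded_linear.linear[OF resolvent_linear[OF mw]]])
  then have "norm ((euler_step m ^^ k) x) = m ^ k * norm ((R m ^^ k) x)" using mw omega_pos by simp
  also have "\<dots> \<le> m ^ k * (M / (m - \<omega>) ^ k * norm x)"
    using mw omega_pos by (intro mult_left_mono resolvent_power_bound) auto
  also have "\<dots> = M * (m / (m - \<omega>)) ^ k * norm x" by (simp add: power_divide)
  also have "\<dots> \<le> M * exp (2 * \<omega> * real k / m) * norm x"
    using omega_pos m M_nonneg by (intro mult_right_mono mult_left_mono power_ratio_le_exp) auto
  also have "\<dots> \<le> M * exp (2 * \<omega> * c) * norm x"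
  proof -
    have "real k / m \<le> c" using k mw omega_pos by (simp add: field_simps)
    then have "2 * \<omega> * real k / m \<le> 2 * \<omega> * c"
      using omega_pos mult_left_mono[of "real k / m" c "2 * \<omega>"] by simp
    then show ?thesis using M_nonneg by (intro mult_right_mono mult_left_mono) auto
  qed
  finally show ?thesis .
qed

lemma euler_step_domain:
  assumes "m > \<omega>" "v \<in> D"
  shows "euler_step m v = v - R m (A v)"
proof -
  interpret L: bounded_linear "R m" using resolvent_linear[OF assms(1)] .
  have "R m (A v) + m *\<^sub>R R m v = v"
    using resolvent_left_inverse[OF assms] by (simp add: L.add L.scale)
  then show ?thesis unfolding euler_step_def by (simp add: algebra_simps eq_diff_eq)
qed

text \<open>The one-step consistency error of the implicit Euler scheme is quadratic in the
  step \<open>h = 1/m\<close>: with \<open>u = A v\<close>, both \<open>S h v - v + h u\<close> and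
  \<open>R m u - h u = - h\<^sup>2 euler_step m (A u)\<close> are \<open>O(h\<^sup>2)\<close>.\<close>

lemma euler_step_error:
  assumes m: "m \<ge> 2 * \<omega>" "m \<ge> 1" and v: "v \<in> D" "A v \<in> D"
    and K: "K \<ge> 0" "\<forall>s\<in>{0..1}. \<forall>y. norm (S s y) \<le> K * norm y"
  shows "norm (S (1 / m) v - euler_step m v) \<le> (1 / m)\<^sup>2 * (K + M * exp (2 * \<omega>)) * norm (A (A v))"
proof -
  define h where "h = 1 / m"
  define u where "u = A v"
  have mw: "m > \<omega>" using m omega_pos by simp
  have h: "0 < h" "h \<le> 1" using m by (auto simp: h_def)
  have "euler_step m u = u - R m (A u)" unfolding u_def by (rule euler_step_domain[OF mw v(2)])
  moreover have "R m u = h *\<^sub>R euler_step m u" "R m (A u) = h *\<^sub>R euler_step m (A u)"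
    using h by (simp_all add: euler_step_def h_def)
  ultimately have "R m u = h *\<^sub>R (u - h *\<^sub>R euler_step m (A u))"
    by simp
  then have Ru: "R m u - h *\<^sub>R u = - (h\<^sup>2 *\<^sub>R euler_step m (A u))"
    by (simp add: power2_eq_square algebra_simps)
  have "norm (euler_step m (A u)) \<le> M * exp (2 * \<omega> * 1) * norm (A u)"
    using euler_step_power_bound[OF m(1), of 1 1 "A u"] m by simp
  then have second: "norm (R m u - h *\<^sub>R u) \<le> h\<^sup>2 * (M * exp (2 * \<omega>)) * norm (A u)"
    unfolding Ru using h by (simp add: mult.assoc mult_left_mono)
  have first: "norm (S h v - v + h *\<^sub>R u) \<le> K * norm (A u) * h\<^sup>2"
    unfolding u_def by (rule neg_generator_second_order_bound[OF generator v K]) (use h in auto)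
  have "S h v - euler_step m v = (S h v - v + h *\<^sub>R u) + (R m u - h *\<^sub>R u)"
    using euler_step_domain[OF mw v(1)] by (simp add: u_def)
  then have "norm (S h v - euler_step m v) \<le> norm (S h v - v + h *\<^sub>R u) + norm (R m u - h *\<^sub>R u)"
    by (metis norm_triangle_ineq)
  also have "\<dots> \<le> h\<^sup>2 * (K + M * exp (2 * \<omega>)) * norm (A u)"
    using first second by (simp add: algebra_simps)
  finally show ?thesis by (simp add: h_def u_def)
qed

lemma euler_power_error_telescope:
  assumes m: "m \<ge> 2 * \<omega>" "m \<ge> 1" and \<sigma>: "\<sigma> \<ge> 0"
  shows "real k \<le> m * \<sigma> \<Longrightarrow> norm (S (real k / m) w - (euler_step m ^^ k) w) \<le>
    (\<Sum>i<k. M * exp (2 * \<omega> * \<sigma>) *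
       norm (S (1 / m) (S (real i / m) w) - euler_step m (S (real i / m) w)))"
proof (induction k arbitrary: w)
  case 0
  then show ?case using C0_semigroupD(2)[OF C0_semigroup] by simp
next
  case (Suc k)
  have mw: "m > \<omega>" and mp: "m > 0" using m omega_pos by auto
  let ?L = "M * exp (2 * \<omega> * \<sigma>)"
  let ?err = "\<lambda>w i. ?L * norm (S (1 / m) (S (real i / m) w) - euler_step m (S (real i / m) w))"
  interpret Fk: bounded_linear "euler_step m ^^ k" using bounded_linear_euler_step_power[OF mw] .
  have shift: "S (real (Suc i) / m) w = S (real i / m) (S (1 / m) w)" for i
  proof -
    have "real (Suc i) / m = real i / m + 1 / m" by (simp add: add_divide_distrib)
    then show ?thesis using C0_semigroupD(3)[OF C0_semigroup, of "real i / m" "1 / m" w] mp by simp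
  qed
  have "S (real (Suc k) / m) w - (euler_step m ^^ Suc k) w =
      (S (real k / m) (S (1 / m) w) - (euler_step m ^^ k) (S (1 / m) w))
      + (euler_step m ^^ k) (S (1 / m) w - euler_step m w)"
    by (simp add: shift Fk.diff funpow_Suc_right del: funpow.simps of_nat_Suc)
  then have "norm (S (real (Suc k) / m) w - (euler_step m ^^ Suc k) w) \<le>
      norm (S (real k / m) (S (1 / m) w) - (euler_step m ^^ k) (S (1 / m) w))
      + norm ((euler_step m ^^ k) (S (1 / m) w - euler_step m w))"
    by (metis norm_triangle_ineq)
  also have "\<dots> \<le> (\<Sum>i<k. ?err (S (1 / m) w) i) + ?L * norm (S (1 / m) w - euler_step m w)"
    using Suc by (intro add_mono Suc.IH euler_step_power_bound m) auto
  also have "\<dots> = (\<Sum>i<k. ?err w (Suc i)) + ?err w 0"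
    by (simp add: shift C0_semigroupD(2)[OF C0_semigroup] del: of_nat_Suc)
  also have "\<dots> = (\<Sum>i<Suc k. ?err w i)"
    by (simp only: sum.lessThan_Suc_shift add.commute)
  finally show ?case .
qed

lemma euler_power_error_bound:
  assumes m: "m \<ge> 2 * \<omega>" "m \<ge> 1" and \<sigma>: "\<sigma> \<ge> 0" and k: "real k \<le> m * \<sigma>"
    and w: "w \<in> D" "A w \<in> D"
    and K1: "K1 \<ge> 0" "\<forall>s\<in>{0..1}. \<forall>y. norm (S s y) \<le> K1 * norm y"
    and K\<sigma>: "K\<sigma> \<ge> 0" "\<forall>s\<in>{0..\<sigma>}. \<forall>y. norm (S s y) \<le> K\<sigma> * norm y"
  shows "norm (S (real k / m) w - (euler_step m ^^ k) w) \<le>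
    real k * (M * exp (2 * \<omega> * \<sigma>) * ((1 / m)\<^sup>2 * (K1 + M * exp (2 * \<omega>)) * (K\<sigma> * norm (A (A w)))))"
proof -
  have mp: "m > 0" using m by simp
  let ?L = "M * exp (2 * \<omega> * \<sigma>)"
  let ?B = "(1 / m)\<^sup>2 * (K1 + M * exp (2 * \<omega>)) * (K\<sigma> * norm (A (A w)))"
  have "norm (S (1 / m) (S (real i / m) w) - euler_step m (S (real i / m) w)) \<le> ?B" if i: "i < k" for i
  proof -
    have t: "real i / m \<ge> 0" "real i / m \<le> \<sigma>" using i k mp by (auto simp: field_simps)
    have inv: "S (real i / m) w \<in> D" "A (S (real i / m) w) = S (real i / m) (A w)"
      "S (real i / m) (A w) \<in> D" "A (S (real i / m) (A w)) = S (real i / m) (A (A w))"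
      using neg_generator_invariant[OF generator w(1) t(1)] neg_generator_invariant[OF generator w(2) t(1)]
      by auto
    have "norm (S (1 / m) (S (real i / m) w) - euler_step m (S (real i / m) w))
        \<le> (1 / m)\<^sup>2 * (K1 + M * exp (2 * \<omega>)) * norm (A (A (S (real i / m) w)))"
      by (rule euler_step_error[OF m inv(1) _ K1]) (use inv in simp)
    also have "norm (A (A (S (real i / m) w))) \<le> K\<sigma> * norm (A (A w))"
      using inv K\<sigma> t by auto
    then have "(1 / m)\<^sup>2 * (K1 + M * exp (2 * \<omega>)) * norm (A (A (S (real i / m) w))) \<le> ?B"
      using K1 M_nonneg by (intro mult_left_mono) auto
    finally show ?thesis .
  qed
  then have "(\<Sum>i<k. ?L * norm (S (1 / m) (S (real i / m) w) - euler_step m (S (real i / m) w)))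
      \<le> real (card {..<k}) * (?L * ?B)"
    using M_nonneg by (intro sum_bounded_above mult_left_mono) auto
  then show ?thesis using euler_power_error_telescope[OF m \<sigma> k, of w] by simp
qed

lemma euler_formula_domain_square:
  assumes w: "w \<in> D" "A w \<in> D" and \<sigma>: "\<sigma> \<ge> 0"
  shows "(\<lambda>n. (euler_step (real n) ^^ nat \<lfloor>real n * \<sigma>\<rfloor>) w) \<longlonglongrightarrow> S \<sigma> w"
proof -
  obtain K1 where K1: "K1 \<ge> 0" "\<forall>s\<in>{0..1}. \<forall>y. norm (S s y) \<le> K1 * norm y"
    using C0_semigroup_bounded_on_Icc[OF C0_semigroup] by blast
  obtain K\<sigma> where K\<sigma>: "K\<sigma> \<ge> 0" "\<forall>s\<in>{0..\<sigma>}. \<forall>y. norm (S s y) \<le> K\<sigma> * norm y"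
    using C0_semigroup_bounded_on_Icc[OF C0_semigroup] by blast
  define k where "k n = nat \<lfloor>real n * \<sigma>\<rfloor>" for n :: nat
  have k: "real (k n) \<le> real n * \<sigma>" for n using \<sigma> by (simp add: k_def)
  define B where "B = M * exp (2 * \<omega> * \<sigma>) * ((K1 + M * exp (2 * \<omega>)) * (K\<sigma> * norm (A (A w))))"
  have "B \<ge> 0" using M_nonneg K1 K\<sigma> by (simp add: B_def)
  obtain N :: nat where N: "real N \<ge> max (2 * \<omega>) 1" using real_arch_simple by blast
  text \<open>\<open>k n\<close> steps of the scheme, each with error \<open>O(n\<^sup>-\<^sup>2)\<close>.\<close>
  have "(\<lambda>n. S (real (k n) / real n) w - (euler_step (real n) ^^ k n) w) \<longlonglongrightarrow> 0"
  proof (rule Lim_null_comparison)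
    show "\<forall>\<^sub>F n in sequentially. norm (S (real (k n) / real n) w - (euler_step (real n) ^^ k n) w)
        \<le> (B * \<sigma>) * (1 / real n)"
      using eventually_ge_at_top[of N]
    proof eventually_elim
      case (elim n)
      then have n: "real n \<ge> 2 * \<omega>" "real n \<ge> 1" using N by auto
      have "norm (S (real (k n) / real n) w - (euler_step (real n) ^^ k n) w)
          \<le> (real (k n) * (1 / real n)) * B * (1 / real n)"
        using euler_power_error_bound[OF n \<sigma> _ w K1 K\<sigma>, of "k n"] k[of n]
        by (simp add: B_def power2_eq_square algebra_simps)
      also have "\<dots> \<le> \<sigma> * B * (1 / real n)"
        using k[of n] n \<open>B \<ge> 0\<close> by (intro mult_right_mono) (auto simp: field_simps)
      finally show ?case by (simp add: algebra_simps)
    qed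
  qed (use tendsto_mult_right_zero[OF lim_1_over_n] in simp)
  moreover have "(\<lambda>n. S (real (k n) / real n) w) \<longlonglongrightarrow> S \<sigma> w"
  proof (rule continuous_within_tendsto_compose[where S="{0..}" and f="\<lambda>t. S t w"])
    show "continuous (at \<sigma> within {0..}) (\<lambda>t. S t w)"
      using C0_semigroupD(4)[OF C0_semigroup, of w] \<sigma> continuous_on_eq_continuous_within by blast
    show "(\<lambda>n. real (k n) / real n) \<longlonglongrightarrow> \<sigma>"
      unfolding k_def by (rule tendsto_floor_mult_div[OF \<sigma>])
  qed simp
  ultimately have "(\<lambda>n. S (real (k n) / real n) w - (S (real (k n) / real n) w - (euler_step (real n) ^^ k n) w))
      \<longlonglongrightarrow> S \<sigma> w - 0"
    by (intro tendsto_diff)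
  then show ?thesis by (simp add: k_def)
qed

theorem euler_formula:
  assumes \<sigma>: "\<sigma> \<ge> 0"
  shows "(\<lambda>n. (euler_step (real n) ^^ nat \<lfloor>real n * \<sigma>\<rfloor>) w) \<longlonglongrightarrow> S \<sigma> w"
proof -
  obtain N :: nat where N: "real N \<ge> 2 * \<omega>" using real_arch_simple by blast
  have "\<forall>\<^sub>F n in sequentially. bounded_linear (euler_step (real n) ^^ nat \<lfloor>real n * \<sigma>\<rfloor>) \<and>
      (\<forall>x. norm ((euler_step (real n) ^^ nat \<lfloor>real n * \<sigma>\<rfloor>) x) \<le> M * exp (2 * \<omega> * \<sigma>) * norm x)"
    using eventually_ge_at_top[of N]
  proof eventually_elim
    case (elim n)
    then have "real n \<ge> 2 * \<omega>" using N by linarith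
    then show ?case
      using \<sigma> omega_pos by (auto intro!: bounded_linear_euler_step_power euler_step_power_bound)
  qed
  from tendsto_of_dense_uniformly_bounded[OF neg_generator_dense_domain_square[OF generator] this
      C0_semigroupD(1)[OF C0_semigroup \<sigma>]]
  show ?thesis using euler_formula_domain_square \<sigma> by blast
qed

end

section \<open>Stability of time-ordered products of semigroups\<close>

text \<open>Kato's argument: time-ordered products of the semigroups are limits of the corresponding
  products of implicit Euler steps, which are products of resolvents.\<close>

locale stable_resolvent_family =
  fixes SG :: "real \<Rightarrow> real \<Rightarrow> 'a::banach \<Rightarrow> 'a" and DG AG and RR :: "real \<Rightarrow> real \<Rightarrow> 'a \<Rightarrow> 'a"
    and I :: "real set" and \<omega> M :: real
  assumes generator: "\<And>\<tau>. \<tau> \<in> I \<Longrightarrow> neg_generator (DG \<tau>) (AG \<tau>) (SG \<tau>)"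
    and omega_pos: "\<omega> > 0" and M_nonneg: "M \<ge> 0"
    and resolvent_linear: "\<And>\<tau> m. \<tau> \<in> I \<Longrightarrow> m > \<omega> \<Longrightarrow> bounded_linear (RR \<tau> m)"
    and resolvent_left_inverse:
      "\<And>\<tau> m v. \<tau> \<in> I \<Longrightarrow> m > \<omega> \<Longrightarrow> v \<in> DG \<tau> \<Longrightarrow> RR \<tau> m (AG \<tau> v + m *\<^sub>R v) = v"
    and resolvent_product_bound: "\<And>m ts x. m > \<omega> \<Longrightarrow> sorted ts \<Longrightarrow> set ts \<subseteq> I \<Longrightarrow>
      norm (fold (\<lambda>t f. RR t m \<circ> f) ts id x) \<le> M / (m - \<omega>) ^ length ts * norm x"
begin

lemma hille_yosida_generator:
  assumes \<tau>: "\<tau> \<in> I"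
  shows "hille_yosida_generator (SG \<tau>) (DG \<tau>) (AG \<tau>) (RR \<tau>) \<omega> M"
proof -
  have "norm ((RR \<tau> m ^^ k) x) \<le> M / (m - \<omega>) ^ k * norm x" if "m > \<omega>" for m k x
  proof -
    have "norm (fold (\<lambda>t f. RR t m \<circ> f) (replicate k \<tau>) id x)
        \<le> M / (m - \<omega>) ^ length (replicate k \<tau>) * norm x"
      using \<tau> that by (intro resolvent_product_bound) auto
    then show ?thesis unfolding fold_compose_replicate by simp
  qed
  then show ?thesis
    unfolding hille_yosida_generator_def
    using generator[OF \<tau>] omega_pos M_nonneg resolvent_linear[OF \<tau>] resolvent_left_inverse[OF \<tau>]
    by blast
qed

text \<open>A list of pairs \<open>(\<tau>, d)\<close> encodes the product of the factors \<open>SG \<tau> d\<close>, the first pair acting first.\<close>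

definition semigroup_product :: "(real \<times> real) list \<Rightarrow> 'a \<Rightarrow> 'a" where
  "semigroup_product ps = fold (\<lambda>(\<tau>, d) f. SG \<tau> d \<circ> f) ps id"

definition euler_count :: "nat \<Rightarrow> real \<Rightarrow> nat" where
  "euler_count n d = nat \<lfloor>real n * d\<rfloor>"

definition euler_product :: "nat \<Rightarrow> (real \<times> real) list \<Rightarrow> 'a \<Rightarrow> 'a" where
  "euler_product n ps = fold (\<lambda>(\<tau>, d) f.
     (hille_yosida_generator.euler_step (RR \<tau>) (real n) ^^ euler_count n d) \<circ> f) ps id"

definition euler_times :: "nat \<Rightarrow> (real \<times> real) list \<Rightarrow> real list" where
  "euler_times n ps = concat (map (\<lambda>(\<tau>, d). replicate (euler_count n d) \<tau>) ps)"

lemma semigroup_product_snoc: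
  "semigroup_product (ps @ [(\<tau>, d)]) x = SG \<tau> d (semigroup_product ps x)"
  by (simp add: semigroup_product_def)

lemma euler_product_snoc: "euler_product n (ps @ [(\<tau>, d)]) x
    = (hille_yosida_generator.euler_step (RR \<tau>) (real n) ^^ euler_count n d) (euler_product n ps x)"
  by (simp add: euler_product_def)

lemma euler_product_tendsto:
  assumes "set (map fst ps) \<subseteq> I" "\<forall>p\<in>set ps. snd p \<ge> 0"
  shows "(\<lambda>n. euler_product n ps x) \<longlonglongrightarrow> semigroup_product ps x"
  using assms
proof (induction ps rule: rev_induct)
  case (snoc p ps)
  obtain \<tau> d where p: "p = (\<tau>, d)" by (cases p) auto
  have \<tau>: "\<tau> \<in> I" and d: "d \<ge> 0" using snoc.prems p by auto
  interpret E: hille_yosida_generator "SG \<tau>" "DG \<tau>" "AG \<tau>" "RR \<tau>" \<omega> M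
    using hille_yosida_generator[OF \<tau>] .
  let ?F = "\<lambda>n. E.euler_step (real n) ^^ euler_count n d"
  obtain N :: nat where N: "real N \<ge> 2 * \<omega>" using real_arch_simple by blast
  have large: "\<forall>\<^sub>F n in sequentially. real n \<ge> 2 * \<omega>"
    using eventually_ge_at_top[of N] by eventually_elim (use N in linarith)
  have IH: "(\<lambda>n. euler_product n ps x - semigroup_product ps x) \<longlonglongrightarrow> 0"
    using snoc by (simp add: LIM_zero_iff)
  have "(\<lambda>n. ?F n (euler_product n ps x - semigroup_product ps x)) \<longlonglongrightarrow> 0"
  proof (rule Lim_null_comparison)
    show "\<forall>\<^sub>F n in sequentially. norm (?F n (euler_product n ps x - semigroup_product ps x))
        \<le> M * exp (2 * \<omega> * d) * norm (euler_product n ps x - semigroup_product ps x)"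
      using large by eventually_elim (rule E.euler_step_power_bound, use d in \<open>simp_all add: euler_count_def\<close>)
  qed (rule tendsto_mult_right_zero[OF tendsto_norm_zero[OF IH]])
  moreover have "(\<lambda>n. ?F n (semigroup_product ps x)) \<longlonglongrightarrow> SG \<tau> d (semigroup_product ps x)"
    unfolding euler_count_def using E.euler_formula[OF d] .
  ultimately have "(\<lambda>n. ?F n (euler_product n ps x - semigroup_product ps x) + ?F n (semigroup_product ps x))
      \<longlonglongrightarrow> 0 + SG \<tau> d (semigroup_product ps x)"
    by (rule tendsto_add)
  moreover have "\<forall>\<^sub>F n in sequentially.
      ?F n (euler_product n ps x - semigroup_product ps x) + ?F n (semigroup_product ps x)
      = euler_product n (ps @ [p]) x"
    using large
  proof eventually_elim
    case (elim n)
    interpret L: bounded_linear "?F n" using E.bounded_linear_euler_step_power elim omega_pos by simp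
    show ?case by (simp add: L.diff euler_product_snoc p)
  qed
  ultimately show ?case by (simp add: tendsto_cong semigroup_product_snoc p)
qed (simp add: semigroup_product_def euler_product_def)

lemma euler_times_snoc: "euler_times n (ps @ [(\<tau>, d)]) = euler_times n ps @ replicate (euler_count n d) \<tau>"
  by (simp add: euler_times_def)

lemma set_euler_times: "set (euler_times n ps) \<subseteq> set (map fst ps)"
  by (induction ps rule: rev_induct) (auto simp: euler_times_snoc euler_times_def split: prod.splits)

lemma sorted_euler_times: "sorted (map fst ps) \<Longrightarrow> sorted (euler_times n ps)"
proof (induction ps rule: rev_induct)
  case (snoc p ps)
  obtain \<tau> d where p: "p = (\<tau>, d)" by (cases p) auto
  have "sorted (map fst ps)" "\<forall>t\<in>set (map fst ps). t \<le> \<tau>" using snoc.prems p by (auto simp: sorted_append)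
  then show ?case using snoc.IH set_euler_times[of n ps] by (auto simp: p euler_times_snoc sorted_append)
qed (simp add: euler_times_def)

lemma length_euler_times:
  assumes "\<forall>p\<in>set ps. snd p \<ge> 0"
  shows "real (length (euler_times n ps)) \<le> real n * sum_list (map snd ps)"
  using assms
proof (induction ps rule: rev_induct)
  case (snoc p ps)
  obtain \<tau> d where p: "p = (\<tau>, d)" by (cases p) auto
  have "real (euler_count n d) \<le> real n * d" using snoc.prems p by (simp add: euler_count_def)
  then show ?case using snoc p by (simp add: euler_times_snoc algebra_simps)
qed (simp add: euler_times_def)

lemma euler_product_eq_resolvent_product:
  assumes n: "real n > \<omega>" and I: "set (map fst ps) \<subseteq> I"
  shows "euler_product n ps x
    = (real n ^ length (euler_times n ps)) *\<^sub>R fold (\<lambda>t f. RR t (real n) \<circ> f) (euler_times n ps) id x"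
  using I
proof (induction ps arbitrary: x rule: rev_induct)
  case (snoc p ps)
  obtain \<tau> d where p: "p = (\<tau>, d)" by (cases p) auto
  have \<tau>: "\<tau> \<in> I" and I': "set (map fst ps) \<subseteq> I" using snoc.prems p by auto
  interpret E: hille_yosida_generator "SG \<tau>" "DG \<tau>" "AG \<tau>" "RR \<tau>" \<omega> M
    using hille_yosida_generator[OF \<tau>] .
  interpret L: bounded_linear "E.euler_step (real n) ^^ euler_count n d"
    by (rule E.bounded_linear_euler_step_power[OF n])
  let ?G = "fold (\<lambda>t f. RR t (real n) \<circ> f) (euler_times n ps) id"
  let ?k = "euler_count n d"
  have "euler_product n (ps @ [p]) x
      = (E.euler_step (real n) ^^ ?k) ((real n ^ length (euler_times n ps)) *\<^sub>R ?G x)"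
    unfolding p euler_product_snoc snoc.IH[OF I'] ..
  also have "\<dots> = (real n ^ length (euler_times n ps)) *\<^sub>R (E.euler_step (real n) ^^ ?k) (?G x)"
    by (simp add: L.scale)
  also have "(E.euler_step (real n) ^^ ?k) (?G x) = (real n ^ ?k) *\<^sub>R (RR \<tau> (real n) ^^ ?k) (?G x)"
    unfolding E.euler_step_def[abs_def]
    by (rule funpow_scaleR_linear[OF bounded_linear.linear[OF resolvent_linear[OF \<tau> n]]])
  also have "(RR \<tau> (real n) ^^ ?k) (?G x) = fold (\<lambda>t f. RR t (real n) \<circ> f) (euler_times n (ps @ [p])) id x"
    by (simp only: p euler_times_snoc fold_append o_apply fold_compose_replicate)
  finally show ?case by (simp only: p euler_times_snoc length_append length_replicate power_add scaleR_scaleR)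
qed (simp add: euler_product_def euler_times_def)

lemma euler_product_bound:
  assumes n: "real n \<ge> 2 * \<omega>" and I: "set (map fst ps) \<subseteq> I" and sorted: "sorted (map fst ps)"
    and d: "\<forall>p\<in>set ps. snd p \<ge> 0"
  shows "norm (euler_product n ps x) \<le> M * exp (2 * \<omega> * sum_list (map snd ps)) * norm x"
proof -
  have nw: "real n > \<omega>" using n omega_pos by simp
  let ?K = "length (euler_times n ps)"
  have "norm (euler_product n ps x) = real n ^ ?K * norm (fold (\<lambda>t f. RR t (real n) \<circ> f) (euler_times n ps) id x)"
    unfolding euler_product_eq_resolvent_product[OF nw I] using nw omega_pos by simp
  also have "\<dots> \<le> real n ^ ?K * (M / (real n - \<omega>) ^ ?K * norm x)"
    using set_euler_times[of n ps] I nw omega_pos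
    by (intro mult_left_mono resolvent_product_bound[OF nw sorted_euler_times[OF sorted]]) auto
  also have "\<dots> = M * (real n / (real n - \<omega>)) ^ ?K * norm x" by (simp add: power_divide)
  also have "\<dots> \<le> M * exp (2 * \<omega> * real ?K / real n) * norm x"
    using omega_pos n M_nonneg by (intro mult_right_mono mult_left_mono power_ratio_le_exp) auto
  also have "\<dots> \<le> M * exp (2 * \<omega> * sum_list (map snd ps)) * norm x"
  proof -
    have "real ?K / real n \<le> sum_list (map snd ps)"
      using length_euler_times[OF d, of n] nw omega_pos by (simp add: field_simps)
    then have "2 * \<omega> * real ?K / real n \<le> 2 * \<omega> * sum_list (map snd ps)"
      using omega_pos mult_left_mono[of _ _ "2 * \<omega>"] by fastforce
    then show ?thesis using M_nonneg by (intro mult_right_mono mult_left_mono) auto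
  qed
  finally show ?thesis .
qed

theorem semigroup_product_bound:
  assumes "set (map fst ps) \<subseteq> I" "sorted (map fst ps)" "\<forall>p\<in>set ps. snd p \<ge> 0"
  shows "norm (semigroup_product ps x) \<le> M * exp (2 * \<omega> * sum_list (map snd ps)) * norm x"
proof (rule tendsto_upperbound[OF tendsto_norm[OF euler_product_tendsto[OF assms(1,3)]]])
  obtain N :: nat where N: "real N \<ge> 2 * \<omega>" using real_arch_simple by blast
  show "\<forall>\<^sub>F n in sequentially. norm (euler_product n ps x) \<le> M * exp (2 * \<omega> * sum_list (map snd ps)) * norm x"
    using eventually_ge_at_top[of N]
    by eventually_elim (rule euler_product_bound[OF _ assms], use N in linarith)
qed simp

end

lemma resolvent_eq:
  assumes "is_resolvent D A lam R"
  shows "resolvent D A lam = R"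
  unfolding resolvent_def
proof (rule the_equality[where P = "\<lambda>R. is_resolvent D A lam R", OF assms])
  fix R' assume R': "is_resolvent D A lam R'"
  show "R' = R"
  proof
    fix x
    have "R' x \<in> D" "A (R' x) + lam *\<^sub>R R' x = x" using R' unfolding is_resolvent_def by auto
    then show "R' x = R x" using assms unfolding is_resolvent_def by metis
  qed
qed

lemma norm_le_of_onorm_le:
  assumes "bounded_linear f" "onorm f \<le> c"
  shows "norm (f x) \<le> c * norm x"
  using onorm[OF assms(1), of x] mult_right_mono[OF assms(2) norm_ge_zero[of x]] by simp

text \<open>The stability constant \<open>\<omega>\<close> may be enlarged, so it can be taken positive.\<close>

lemma stableE:
  assumes "stable T D A"
  obtains M \<omega> where "M \<ge> 1" "\<omega> > 0"
    "\<And>lam t. lam > \<omega> \<Longrightarrow> t \<in> {0..T} \<Longrightarrow> is_resolvent (D t) (A t) lam (resolvent (D t) (A t) lam)"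
    "\<And>lam ts x. lam > \<omega> \<Longrightarrow> sorted ts \<Longrightarrow> set ts \<subseteq> {0..T} \<Longrightarrow>
       norm (res_prod D A lam ts x) \<le> M / (lam - \<omega>) ^ length ts * norm x"
proof -
  obtain M \<omega> where M: "M \<ge> 1"
    and ex: "\<forall>lam>\<omega>. \<forall>t\<in>{0..T}. \<exists>R. is_resolvent (D t) (A t) lam R"
    and bound: "\<forall>lam>\<omega>. \<forall>ts. sorted ts \<and> set ts \<subseteq> {0..T} \<longrightarrow>
        onorm (res_prod D A lam ts) \<le> M / (lam - \<omega>) ^ length ts"
    using assms unfolding stable_def by blast
  define \<omega>' where "\<omega>' = max \<omega> 1"
  have isr: "is_resolvent (D t) (A t) lam (resolvent (D t) (A t) lam)" if "lam > \<omega>'" "t \<in> {0..T}" for lam t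
    using ex that resolvent_eq by (fastforce simp: \<omega>'_def)
  moreover have "norm (res_prod D A lam ts x) \<le> M / (lam - \<omega>') ^ length ts * norm x"
    if lam: "lam > \<omega>'" and ts: "sorted ts" "set ts \<subseteq> {0..T}" for lam ts x
  proof (rule norm_le_of_onorm_le)
    show "bounded_linear (res_prod D A lam ts)"
      unfolding res_prod_def using isr[OF lam] ts(2)
      by (intro bounded_linear_fold_compose) (auto simp: is_resolvent_def id_def bounded_linear_ident)
    have "(lam - \<omega>') ^ length ts \<le> (lam - \<omega>) ^ length ts"
      using lam by (intro power_mono) (auto simp: \<omega>'_def)
    moreover have "lam - \<omega>' > 0" "lam - \<omega> > 0" using lam by (auto simp: \<omega>'_def)
    ultimately have "M / (lam - \<omega>) ^ length ts \<le> M / (lam - \<omega>') ^ length ts"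
      using M by (intro divide_left_mono) auto
    then show "onorm (res_prod D A lam ts) \<le> M / (lam - \<omega>') ^ length ts"
      using bound lam ts by (force simp: \<omega>'_def)
  qed
  moreover have "\<omega>' > 0" by (simp add: \<omega>'_def)
  ultimately show ?thesis using that M by blast
qed

text \<open>Stability of the resolvents of \<open>AP\<close> bounds the semigroups generated by any \<open>AG \<subseteq> AP\<close>.\<close>

lemma stable_resolvent_family_of_stable:
  fixes SG :: "real \<Rightarrow> real \<Rightarrow> 'a::banach \<Rightarrow> 'a"
  assumes "stable T DP AP"
    and gen: "\<And>\<tau>. \<tau> \<in> {0..T} \<Longrightarrow> neg_generator (DG \<tau>) (AG \<tau>) (SG \<tau>)"
    and part: "\<And>\<tau> v. \<tau> \<in> {0..T} \<Longrightarrow> v \<in> DG \<tau> \<Longrightarrow> v \<in> DP \<tau> \<and> AP \<tau> v = AG \<tau> v"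
  shows "\<exists>\<omega> M. stable_resolvent_family SG DG AG (\<lambda>\<tau> m. resolvent (DP \<tau>) (AP \<tau>) m) {0..T} \<omega> M"
proof -
  obtain M \<omega> where M: "M \<ge> 1" "\<omega> > 0"
    and isr: "\<And>lam t. lam > \<omega> \<Longrightarrow> t \<in> {0..T} \<Longrightarrow> is_resolvent (DP t) (AP t) lam (resolvent (DP t) (AP t) lam)"
    and bound: "\<And>lam ts x. lam > \<omega> \<Longrightarrow> sorted ts \<Longrightarrow> set ts \<subseteq> {0..T} \<Longrightarrow>
       norm (res_prod DP AP lam ts x) \<le> M / (lam - \<omega>) ^ length ts * norm x"
    using stableE[OF assms(1)] by blast
  have "stable_resolvent_family SG DG AG (\<lambda>\<tau> m. resolvent (DP \<tau>) (AP \<tau>) m) {0..T} \<omega> M"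
  proof (rule stable_resolvent_family.intro[OF gen \<open>\<omega> > 0\<close>])
    show "bounded_linear (resolvent (DP \<tau>) (AP \<tau>) m)" if "\<tau> \<in> {0..T}" "\<omega> < m" for \<tau> m
      using isr[OF that(2,1)] unfolding is_resolvent_def by blast
    show "resolvent (DP \<tau>) (AP \<tau>) m (AG \<tau> v + m *\<^sub>R v) = v"
      if "\<tau> \<in> {0..T}" "\<omega> < m" "v \<in> DG \<tau>" for \<tau> m v
      using isr[OF that(2,1)] part[OF that(1,3)] unfolding is_resolvent_def by metis
    show "norm (fold (\<lambda>t f. resolvent (DP t) (AP t) m \<circ> f) ts id x) \<le> M / (m - \<omega>) ^ length ts * norm x"
      if "\<omega> < m" "sorted ts" "set ts \<subseteq> {0..T}" for m ts x
      using bound[OF that] unfolding res_prod_def .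
  qed (use M in simp_all)
  then show ?thesis by blast
qed

section \<open>The piecewise constant approximation\<close>

definition grid_overlap :: "real \<Rightarrow> nat \<Rightarrow> real \<Rightarrow> real \<Rightarrow> nat \<Rightarrow> real" where
  "grid_overlap T n t s m = max 0 (min t (grid T n (Suc m)) - max s (grid T n m))"

lemma Uapp_eq_fold_overlap:
  "Uapp T S n t s = fold (\<lambda>m f. S (grid T n m) (grid_overlap T n t s m) \<circ> f) [0..<n] id"
  by (simp add: Uapp_def grid_overlap_def)

lemma grid_mono: "T \<ge> 0 \<Longrightarrow> k \<le> l \<Longrightarrow> grid T n k \<le> grid T n l"
  by (simp add: grid_def divide_right_mono mult_right_mono)

lemma grid_Suc: "n > 0 \<Longrightarrow> grid T n (Suc k) = grid T n k + T / real n"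
  by (simp add: grid_def field_simps)

lemma grid_in_Icc: "T \<ge> 0 \<Longrightarrow> k \<le> n \<Longrightarrow> n > 0 \<Longrightarrow> grid T n k \<in> {0..T}"
  by (auto simp: grid_def field_simps intro: mult_left_mono)

lemma grid_overlap_nonneg: "grid_overlap T n t s m \<ge> 0"
  by (simp add: grid_overlap_def)

lemma grid_overlap_le: "n > 0 \<Longrightarrow> T \<ge> 0 \<Longrightarrow> grid_overlap T n t s m \<le> T / real n"
  using grid_Suc[of n T m] by (simp add: grid_overlap_def)

lemma grid_interval_bounds:
  assumes T: "T > 0" and n: "n > 0" and j: "j \<in> {1..n}"
    and rt: "grid T n (j - 1) \<le> r" "r \<le> t" "t \<le> grid T n j"
  shows "0 \<le> r" "t \<le> T" "t - r \<le> T / real n"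
proof -
  have "grid T n j = grid T n (j - 1) + T / real n"
    using grid_Suc[OF n, of T "j - 1"] j by simp
  moreover have "grid T n (j - 1) \<in> {0..T}" "grid T n j \<in> {0..T}"
    using grid_in_Icc[of T "j - 1" n] grid_in_Icc[of T j n] T n j by auto
  ultimately show "0 \<le> r" "t \<le> T" "t - r \<le> T / real n" using rt by auto
qed

lemma fold_compose_ids:
  "\<forall>k\<in>set xs. F k = id \<Longrightarrow> fold (\<lambda>k f. F k \<circ> f) xs f0 = f0"
  by (induction xs arbitrary: f0) auto

lemma fold_compose_intertwine:
  assumes "\<forall>k\<in>set xs. \<forall>y. F k (J y) = J (G k y)" "\<forall>y. f0 (J y) = J (g0 y)"
  shows "fold (\<lambda>k f. F k \<circ> f) xs f0 (J y) = J (fold (\<lambda>k f. G k \<circ> f) xs g0 y)"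
  using assms by (induction xs arbitrary: f0 g0) auto

lemma Uapp_refl:
  assumes "\<forall>k<n. S (grid T n k) 0 = id"
  shows "Uapp T S n s s = id"
  unfolding Uapp_eq_fold_overlap using assms by (intro fold_compose_ids) (simp add: grid_overlap_def)

lemma Uapp_within_grid_interval:
  assumes T: "T > 0" and m: "m < n" and a: "a = max r (grid T n m)"
    and s: "a \<le> s" "s \<le> grid T n (Suc m)" and S0: "\<forall>k<n. S (grid T n k) 0 = id"
  shows "Uapp T S n s r = S (grid T n m) (s - a) \<circ> Uapp T S n a r"
proof -
  have split: "[0..<n] = [0..<m] @ [m] @ [Suc m..<n]"
    using m upt_add_eq_append[of 0 m "n - m"] by (simp add: upt_conv_Cons)
  let ?G = "\<lambda>x k f. S (grid T n k) (grid_overlap T n x r k) \<circ> f"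
  have below: "fold (?G s) [0..<m] id = fold (?G a) [0..<m] id"
  proof (rule fold_cong[OF refl refl])
    fix k assume "k \<in> set [0..<m]"
    then have "grid T n (Suc k) \<le> grid T n m" using T by (intro grid_mono) auto
    then have "grid T n (Suc k) \<le> a" "grid T n (Suc k) \<le> s" using a s by auto
    then have "grid_overlap T n s r k = grid_overlap T n a r k" by (simp add: grid_overlap_def min_def)
    then show "?G s k = ?G a k" by simp
  qed
  have above: "fold (?G x) [Suc m..<n] f0 = f0" if "x \<le> grid T n (Suc m)" for x f0
  proof (rule fold_compose_ids, intro ballI)
    fix k assume "k \<in> set [Suc m..<n]"
    then have "grid T n (Suc m) \<le> grid T n k" "k < n" using T by (auto intro: grid_mono)
    then show "S (grid T n k) (grid_overlap T n x r k) = id"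
      using that S0 by (simp add: grid_overlap_def)
  qed
  have "grid_overlap T n s r m = s - a" "grid_overlap T n a r m = 0"
    using a s by (auto simp: grid_overlap_def)
  then have "Uapp T S n s r = fold (?G s) [Suc m..<n] (S (grid T n m) (s - a) \<circ> fold (?G s) [0..<m] id)"
    "Uapp T S n a r = fold (?G a) [Suc m..<n] (S (grid T n m) 0 \<circ> fold (?G a) [0..<m] id)"
    unfolding Uapp_eq_fold_overlap split fold_append by simp_all
  then show ?thesis
    unfolding above[OF s(2)] above[OF order_trans[OF s]] below using S0 m by simp
qed

lemma Aapp_within_grid_interval:
  assumes T: "T > 0" and n: "n > 0" and s: "grid T n m < s" "s < grid T n (Suc m)"
  shows "Aapp T A n s = A (grid T n m)"
proof -
  have "\<lfloor>real n * s / T\<rfloor> = int m"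
  proof (rule floor_unique)
    show "real_of_int (int m) \<le> real n * s / T"
      using s(1) n T by (simp add: grid_def field_simps)
    show "real n * s / T < real_of_int (int m) + 1"
      using s(2) n T by (simp add: grid_def field_simps)
  qed
  then show ?thesis unfolding Aapp_def grid_def by (simp add: field_simps)
qed

definition grid_floor :: "real \<Rightarrow> nat \<Rightarrow> real \<Rightarrow> real" where
  "grid_floor T n s = T * real_of_int \<lfloor>real n * s / T\<rfloor> / real n"

lemma Aapp_eq_grid_floor: "Aapp T A n s = A (grid_floor T n s)"
  by (simp add: Aapp_def grid_floor_def)

lemma grid_floor_bounds:
  assumes T: "T > 0" and n: "n > 0"
  shows "s - T / real n < grid_floor T n s" "grid_floor T n s \<le> s"
proof -
  define x where "x = real n * s / T"
  have "grid_floor T n s = T * real_of_int \<lfloor>x\<rfloor> / real n" by (simp add: grid_floor_def x_def)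
  moreover have "T * real_of_int \<lfloor>x\<rfloor> / real n \<le> T * x / real n"
    using T n by (intro divide_right_mono mult_left_mono) auto
  moreover have "T * (x - 1) / real n < T * real_of_int \<lfloor>x\<rfloor> / real n"
    using T n by (intro divide_strict_right_mono mult_strict_left_mono) linarith+
  moreover have "T * x / real n = s" "T * (x - 1) / real n = s - T / real n"
    using T n by (simp_all add: x_def field_simps)
  ultimately show "s - T / real n < grid_floor T n s" "grid_floor T n s \<le> s" by simp_all
qed

lemma grid_floor_in_Icc:
  assumes T: "T > 0" and s: "s \<in> {0..T}"
  shows "grid_floor T n s \<in> {0..T}"
proof (cases "n = 0")
  case False
  have "0 \<le> real_of_int \<lfloor>real n * s / T\<rfloor>" using s T by simp
  then show ?thesis using grid_floor_bounds(2)[OF T, of n s] False s T by (simp add: grid_floor_def)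
qed (use T in \<open>simp add: grid_floor_def\<close>)

context stable_resolvent_family
begin

lemma Uapp_bound:
  assumes T: "T > 0" and n: "n > 0" and I: "{0..T} \<subseteq> I"
  shows "norm (Uapp T SG n t s y) \<le> M * exp (2 * \<omega> * T) * norm y"
proof -
  define ps where "ps = map (\<lambda>m. (grid T n m, grid_overlap T n t s m)) [0..<n]"
  have sum: "sum_list (map snd ps) \<le> T"
  proof -
    have "sum_list (map snd ps) = (\<Sum>m\<in>{0..<n}. grid_overlap T n t s m)"
      by (simp add: ps_def interv_sum_list_conv_sum_set_nat o_def)
    also have "\<dots> \<le> real (card {0..<n}) * (T / real n)"
      using T n by (intro sum_bounded_above grid_overlap_le) auto
    also have "\<dots> = T" using n by simp
    finally show ?thesis .
  qed
  have "Uapp T SG n t s = semigroup_product ps"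
    unfolding semigroup_product_def ps_def Uapp_eq_fold_overlap fold_map by (simp add: o_def)
  moreover have "set (map fst ps) \<subseteq> I" using grid_in_Icc T n I by (auto simp: ps_def)
  moreover have "sorted (map fst ps)"
    using grid_mono T by (auto simp: ps_def sorted_iff_nth_mono)
  moreover have "\<forall>p\<in>set ps. snd p \<ge> 0" by (auto simp: ps_def grid_overlap_nonneg)
  ultimately have "norm (Uapp T SG n t s y) \<le> M * exp (2 * \<omega> * sum_list (map snd ps)) * norm y"
    using semigroup_product_bound by simp
  also have "\<dots> \<le> M * exp (2 * \<omega> * T) * norm y"
    using sum M_nonneg omega_pos by (intro mult_right_mono mult_left_mono) auto
  finally show ?thesis .
qed

end

section \<open>The approximation estimate\<close>

locale evolution_approximation =
  fixes J :: "'y::banach \<Rightarrow> 'x::banach" and T :: real and D :: "real \<Rightarrow> 'x set"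
    and A :: "real \<Rightarrow> 'x \<Rightarrow> 'x" and S :: "real \<Rightarrow> real \<Rightarrow> 'x \<Rightarrow> 'x" and U :: "real \<Rightarrow> real \<Rightarrow> 'x \<Rightarrow> 'x"
  assumes J_linear: "bounded_linear J" and J_inj: "inj J" and T_pos: "T > 0"
    and generator: "\<forall>t\<in>{0..T}. neg_generator (D t) (A t) (S t)"
    and Y_admissible: "\<forall>t\<in>{0..T}. admissible J (S t)"
    and Y_stable: "stable T (\<lambda>t. part_dom J (D t) (A t)) (\<lambda>t. part_op J (A t))"
    and Y_domain: "\<forall>t\<in>{0..T}. \<forall>y. J y \<in> D t"
    and A_Y_linear: "\<forall>t\<in>{0..T}. bounded_linear (\<lambda>y. A t (J y))"
    and A_Y_continuous:
      "\<forall>t\<in>{0..T}. ((\<lambda>s. onorm (\<lambda>y. A s (J y) - A t (J y))) \<longlongrightarrow> 0) (at t within {0..T})"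
    and U_linear: "\<forall>s t. 0 \<le> s \<and> s \<le> t \<and> t \<le> T \<longrightarrow> bounded_linear (U t s)"
    and U_continuous: "\<forall>x. continuous_on {(t, s). 0 \<le> s \<and> s \<le> t \<and> t \<le> T} (\<lambda>(t, s). U t s x)"
    and U_refl: "\<forall>s\<in>{0..T}. U s s = id"
    and U_exp_bound: "\<exists>M \<omega>. \<forall>s t. 0 \<le> s \<and> s \<le> t \<and> t \<le> T \<longrightarrow> onorm (U t s) \<le> M * exp (\<omega> * (t - s))"
    and U_deriv_left: "\<forall>t\<in>{0..T}. \<forall>s\<in>{0..t}. \<forall>g.
      ((\<lambda>s'. U t s' (J g)) has_vector_derivative U t s (A s (J g))) (at s within {0..t})"
begin

definition SY :: "real \<Rightarrow> real \<Rightarrow> 'y \<Rightarrow> 'y" where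
  "SY t = (SOME SY. C0_semigroup SY \<and> (\<forall>\<tau>\<ge>0. \<forall>y. J (SY \<tau> y) = S t \<tau> (J y)))"

lemma SY:
  assumes t: "t \<in> {0..T}"
  shows "C0_semigroup (SY t)" "\<And>\<tau> y. \<tau> \<ge> 0 \<Longrightarrow> J (SY t \<tau> y) = S t \<tau> (J y)"
proof -
  have "\<exists>SY. C0_semigroup SY \<and> (\<forall>\<tau>\<ge>0. \<forall>y. J (SY \<tau> y) = S t \<tau> (J y))"
    using Y_admissible t unfolding admissible_def by simp
  from someI_ex[OF this, folded SY_def]
  show "C0_semigroup (SY t)" "\<And>\<tau> y. \<tau> \<ge> 0 \<Longrightarrow> J (SY t \<tau> y) = S t \<tau> (J y)" by simp_all
qed

lemma generator_SY_subset_part: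
  assumes t: "t \<in> {0..T}" and v: "v \<in> generator_domain (SY t)"
  shows "v \<in> part_dom J (D t) (A t) \<and> part_op J (A t) v = neg_generator_of (SY t) v"
proof -
  interpret J: bounded_linear J by (rule J_linear)
  have g: "neg_generator (D t) (A t) (S t)" using generator t by simp
  have "\<forall>\<^sub>F h in at_right 0. J (semigroup_quotient (SY t) v h) = semigroup_quotient (S t) (J v) h"
    using eventually_at_right_0_pos
    by eventually_elim (simp add: semigroup_quotient_def J.scale J.diff SY(2)[OF t])
  moreover have "((\<lambda>h. J (semigroup_quotient (SY t) v h)) \<longlongrightarrow> J (- neg_generator_of (SY t) v)) (at_right 0)"
    by (intro J.tendsto neg_generator_tendsto[OF neg_generator_neg_generator_of[OF SY(1)[OF t]] v])
  ultimately have "(semigroup_quotient (S t) (J v) \<longlongrightarrow> - J (neg_generator_of (SY t) v)) (at_right 0)"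
    by (simp add: tendsto_cong J.neg)
  from neg_generator_domainI[OF g this]
  show ?thesis unfolding part_dom_def part_op_def using J_inj by (simp add: inv_f_f)
qed

lemma stable_resolvent_family_Y:
  "\<exists>\<omega> M. stable_resolvent_family SY (\<lambda>t. generator_domain (SY t)) (\<lambda>t. neg_generator_of (SY t))
     (\<lambda>\<tau> m. resolvent (part_dom J (D \<tau>) (A \<tau>)) (part_op J (A \<tau>)) m) {0..T} \<omega> M"
  by (rule stable_resolvent_family_of_stable[OF Y_stable neg_generator_neg_generator_of[OF SY(1)]
        generator_SY_subset_part])

lemma Uapp_J:
  assumes n: "n > 0"
  shows "Uapp T S n t s (J y) = J (Uapp T SY n t s y)"
  unfolding Uapp_eq_fold_overlap
proof (rule fold_compose_intertwine)
  show "\<forall>k\<in>set [0..<n]. \<forall>y. S (grid T n k) (grid_overlap T n t s k) (J y)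
      = J (SY (grid T n k) (grid_overlap T n t s k) y)"
    using grid_in_Icc[of T _ n] T_pos n by (simp add: SY(2) grid_overlap_nonneg)
qed simp

lemma Uapp_Y_bounded: "\<exists>K\<ge>0. \<forall>n>0. \<forall>t s y. norm (Uapp T SY n t s y) \<le> K * norm y"
proof -
  obtain \<omega> M where "stable_resolvent_family SY (\<lambda>t. generator_domain (SY t))
    (\<lambda>t. neg_generator_of (SY t)) (\<lambda>\<tau> m. resolvent (part_dom J (D \<tau>) (A \<tau>)) (part_op J (A \<tau>)) m)
    {0..T} \<omega> M"
    using stable_resolvent_family_Y by blast
  then interpret F: stable_resolvent_family SY "\<lambda>t. generator_domain (SY t)"
    "\<lambda>t. neg_generator_of (SY t)" "\<lambda>\<tau> m. resolvent (part_dom J (D \<tau>) (A \<tau>)) (part_op J (A \<tau>)) m"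
    "{0..T}" \<omega> M .
  show ?thesis
    using F.Uapp_bound[OF T_pos] F.M_nonneg by (intro exI[of _ "M * exp (2 * \<omega> * T)"]) auto
qed

lemma U_bounded: "\<exists>K\<ge>0. \<forall>s t x. 0 \<le> s \<longrightarrow> s \<le> t \<longrightarrow> t \<le> T \<longrightarrow> norm (U t s x) \<le> K * norm x"
proof -
  obtain M \<omega> where M: "\<forall>s t. 0 \<le> s \<and> s \<le> t \<and> t \<le> T \<longrightarrow> onorm (U t s) \<le> M * exp (\<omega> * (t - s))"
    using U_exp_bound by blast
  define K where "K = \<bar>M\<bar> * exp (\<bar>\<omega>\<bar> * T)"
  have "norm (U t s x) \<le> K * norm x" if st: "0 \<le> s" "s \<le> t" "t \<le> T" for s t x
  proof (rule norm_le_of_onorm_le)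
    show "bounded_linear (U t s)" using U_linear st by blast
    have "\<omega> * (t - s) \<le> \<bar>\<omega>\<bar> * (t - s)" using st by (intro mult_right_mono) auto
    also have "\<dots> \<le> \<bar>\<omega>\<bar> * T" using st by (intro mult_left_mono) auto
    finally have "exp (\<omega> * (t - s)) \<le> exp (\<bar>\<omega>\<bar> * T)" by simp
    then have "M * exp (\<omega> * (t - s)) \<le> K"
      unfolding K_def by (metis abs_ge_self abs_ge_zero exp_ge_zero mult_mono order.trans)
    then show "onorm (U t s) \<le> K" using M st by (meson order_trans)
  qed
  moreover have "K \<ge> 0" by (simp add: K_def)
  ultimately show ?thesis by blast
qed

lemma S_grid_zero: "n > 0 \<Longrightarrow> \<forall>k<n. S (grid T n k) 0 = id"
proof (intro allI impI)
  fix k assume "n > 0" "k < n"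
  then have "grid T n k \<in> {0..T}" using grid_in_Icc[of T k n] T_pos by simp
  then show "S (grid T n k) 0 = id"
    using generator C0_semigroupD(2)[OF neg_generator_C0_semigroup] by blast
qed

lemma U_tendsto_left:
  assumes t: "t \<in> {0..T}" and s: "s \<in> {0..t}"
  shows "((\<lambda>s'. U t s' x) \<longlongrightarrow> U t s x) (at s within {0..t})"
proof -
  have "continuous_on {0..t} (\<lambda>s'. (\<lambda>(t, s). U t s x) (t, s'))"
    by (rule continuous_on_compose2[OF U_continuous[rule_format, of x]]) (use t in \<open>auto intro: continuous_intros\<close>)
  then show ?thesis using s unfolding continuous_on_def by simp
qed

definition A_Y :: "real \<Rightarrow> 'y \<Rightarrow>\<^sub>L 'x" where
  "A_Y s = Blinfun (\<lambda>y. A s (J y))"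

lemma norm_A_Y_diff:
  assumes "s \<in> {0..T}" "p \<in> {0..T}"
  shows "norm (A_Y s - A_Y p) = onorm (\<lambda>y. A s (J y) - A p (J y))"
  using A_Y_linear assms
  by (simp add: norm_blinfun.rep_eq minus_blinfun.rep_eq A_Y_def bounded_linear_Blinfun_apply)

lemma continuous_on_A_Y: "continuous_on {0..T} A_Y"
  unfolding continuous_on_def
proof
  fix t assume t: "t \<in> {0..T}"
  have "\<forall>\<^sub>F s in at t within {0..T}. onorm (\<lambda>y. A s (J y) - A t (J y)) = norm (A_Y s - A_Y t)"
    using norm_A_Y_diff t by (auto simp: eventually_at_filter)
  moreover have "((\<lambda>s. onorm (\<lambda>y. A s (J y) - A t (J y))) \<longlongrightarrow> 0) (at t within {0..T})"
    using A_Y_continuous t by blast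
  ultimately have "((\<lambda>s. norm (A_Y s - A_Y t)) \<longlongrightarrow> 0) (at t within {0..T})"
    by (simp add: tendsto_cong)
  then show "(A_Y \<longlongrightarrow> A_Y t) (at t within {0..T})"
    by (simp add: tendsto_norm_zero_iff LIM_zero_iff)
qed

lemma onorm_A_Aapp_eq: "s \<in> {0..T} \<Longrightarrow>
    onorm (\<lambda>y. A s (J y) - Aapp T A n s (J y)) = norm (A_Y s - A_Y (grid_floor T n s))"
  using norm_A_Y_diff[of s "grid_floor T n s"] grid_floor_in_Icc[OF T_pos] by (simp add: Aapp_eq_grid_floor)

lemma bdd_above_onorm_A_Aapp: "bdd_above ((\<lambda>s. onorm (\<lambda>y. A s (J y) - Aapp T A n s (J y))) ` {0..T})"
proof -
  obtain K where K: "\<forall>s\<in>{0..T}. norm (A_Y s) \<le> K"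
    using compact_imp_bounded[OF compact_continuous_image[OF continuous_on_A_Y compact_Icc]]
    by (auto simp: bounded_iff)
  have "norm (A_Y s - A_Y (grid_floor T n s)) \<le> 2 * K" if "s \<in> {0..T}" for s
  proof -
    have "norm (A_Y s) \<le> K" "norm (A_Y (grid_floor T n s)) \<le> K"
      using K that grid_floor_in_Icc[OF T_pos that, of n] by blast+
    then show ?thesis using norm_triangle_ineq4[of "A_Y s" "A_Y (grid_floor T n s)"] by linarith
  qed
  then show ?thesis by (intro bdd_aboveI2) (simp add: onorm_A_Aapp_eq)
qed

lemma onorm_A_Aapp_le_dist: "s \<in> {0..T} \<Longrightarrow> onorm (\<lambda>y. A s (J y) - Aapp T A n s (J y)) \<le> dist_AAn T J A n"
  unfolding dist_AAn_def by (rule cSUP_upper[OF _ bdd_above_onorm_A_Aapp])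

lemma dist_AAn_nonneg: "dist_AAn T J A n \<ge> 0"
proof -
  have "0 \<in> {0..T}" using T_pos by simp
  from onorm_A_Aapp_le_dist[OF this, of n] onorm_A_Aapp_eq[OF this, of n] show ?thesis
    by (metis norm_ge_zero order_trans)
qed

text \<open>Uniform continuity of \<open>A_Y\<close> on the compact interval.\<close>

theorem dist_AAn_tendsto_zero: "(\<lambda>n. dist_AAn T J A n) \<longlonglongrightarrow> 0"
  unfolding LIMSEQ_iff
proof (intro allI impI)
  fix e :: real assume e: "e > 0"
  obtain d where d: "d > 0" "\<forall>x\<in>{0..T}. \<forall>x'\<in>{0..T}. dist x' x < d \<longrightarrow> dist (A_Y x') (A_Y x) < e / 2"
    using compact_uniformly_continuous[OF continuous_on_A_Y compact_Icc] e
    unfolding uniformly_continuous_on_def by (meson half_gt_zero)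
  obtain N :: nat where N: "real N > T / d" using reals_Archimedean2 by blast
  have "N > 0" using N T_pos d by (cases "N = 0") (auto simp: field_simps)
  have le: "dist_AAn T J A n \<le> e / 2" if n: "n \<ge> N" for n
    unfolding dist_AAn_def
  proof (rule cSUP_least)
    fix s assume s: "s \<in> {0..T}"
    have "T / real n \<le> T / real N" using n \<open>N > 0\<close> T_pos by (intro divide_left_mono) auto
    also have "T / real N < d" using N d \<open>N > 0\<close> by (simp add: field_simps)
    finally have "dist (grid_floor T n s) s < d"
      using grid_floor_bounds[OF T_pos, of n s] n \<open>N > 0\<close> by (simp add: dist_real_def)
    then have "dist (A_Y (grid_floor T n s)) (A_Y s) < e / 2"
      using d s grid_floor_in_Icc[OF T_pos s] by blast
    then show "onorm (\<lambda>y. A s (J y) - Aapp T A n s (J y)) \<le> e / 2"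
      using onorm_A_Aapp_eq[OF s] by (simp add: dist_norm norm_minus_commute)
  qed (use T_pos in simp)
  show "\<exists>N. \<forall>n\<ge>N. norm (dist_AAn T J A n - 0) < e"
  proof (intro exI[of _ N] allI impI)
    fix n assume "N \<le> n"
    then have "dist_AAn T J A n \<le> e / 2" by (rule le)
    then show "norm (dist_AAn T J A n - 0) < e" using dist_AAn_nonneg[of n] e by simp
  qed
qed

lemma U_frozen_orbit_derivative:
  fixes y :: 'y
  assumes t: "t \<in> {0..T}" and \<tau>: "\<tau> \<in> {0..T}" and ab: "0 \<le> a" "b \<le> t" and s: "s \<in> {a..b}"
  defines "w \<equiv> \<lambda>s. S \<tau> (s - a) (J y)"
  shows "((\<lambda>s. U t s (w s)) has_vector_derivative U t s (A s (w s) - A \<tau> (w s))) (at s within {a..b})"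
proof -
  obtain K where K: "K \<ge> 0" "\<And>s t x. 0 \<le> s \<Longrightarrow> s \<le> t \<Longrightarrow> t \<le> T \<Longrightarrow> norm (U t s x) \<le> K * norm x"
    using U_bounded by blast
  have g: "neg_generator (D \<tau>) (A \<tau>) (S \<tau>)" using generator \<tau> by simp
  have in_Y: "w s = J (SY \<tau> (s - a) y)" using SY(2)[OF \<tau>] s by (simp add: w_def)
  have sub: "{a..b} \<subseteq> {0..t}" using ab by auto
  interpret Ut: bounded_linear "U t s" using U_linear s ab t by auto
  have "((\<lambda>s'. U t s' (w s')) has_vector_derivative U t s (A s (w s)) + U t s (- A \<tau> (w s)))
      (at s within {a..b})"
  proof (rule has_vector_derivative_apply_operator_family[where U = "U t" and w = w and K = K])
    show "bounded_linear (U t s')" if "s' \<in> {a..b}" for s'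
      using U_linear that ab t by auto
    show "norm (U t s' x) \<le> K * norm x" if "s' \<in> {a..b}" for s' x
      using K(2)[of s' t] that ab t by auto
    show "((\<lambda>s'. U t s' (- A \<tau> (w s))) \<longlongrightarrow> U t s (- A \<tau> (w s))) (at s within {a..b})"
      using U_tendsto_left[OF t] s sub by (blast intro: tendsto_within_subset)
    show "((\<lambda>s'. U t s' (w s)) has_vector_derivative U t s (A s (w s))) (at s within {a..b})"
      unfolding in_Y using U_deriv_left t s sub by (blast intro: has_vector_derivative_within_subset)
    show "(w has_vector_derivative - A \<tau> (w s)) (at s within {a..b})"
      unfolding w_def by (rule neg_generator_shifted_orbit_derivative[OF g Y_domain[rule_format, OF \<tau>] s])
  qed
  then show ?thesis by (simp add: Ut.diff Ut.neg)
qed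
lemma norm_A_Aapp_le:
  assumes "s \<in> {0..T}"
  shows "norm (A s (J y) - Aapp T A n s (J y)) \<le> dist_AAn T J A n * norm y"
proof -
  have "bounded_linear (\<lambda>y. A s (J y) - Aapp T A n s (J y))"
    using A_Y_linear assms grid_floor_in_Icc[OF T_pos assms, of n]
    by (simp add: Aapp_eq_grid_floor bounded_linear_sub)
  from onorm[OF this] show ?thesis
    using onorm_A_Aapp_le_dist[OF assms, of n] by (meson mult_right_mono norm_ge_zero order_trans)
qed

lemma norm_A_frozen_le:
  assumes n: "n > 0" and s: "grid T n m < s" "s < grid T n (Suc m)" "s \<le> T"
  shows "norm (A s (J y) - A (grid T n m) (J y)) \<le> dist_AAn T J A n * norm y"
proof -
  have "0 \<le> grid T n m" using T_pos by (simp add: grid_def)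
  then show ?thesis
    using norm_A_Aapp_le[of s y n] Aapp_within_grid_interval[where A = A, OF T_pos n s(1,2)] s by simp
qed

lemma evolution_grid_step:
  assumes n: "n > 0" and m: "m < n" and rt: "0 \<le> r" "r \<le> t" "t \<le> T"
    and a: "a = max r (grid T n m)" and b: "b = min t (grid T n (Suc m))" and ab: "a \<le> b"
    and KU: "KU \<ge> 0" "\<And>s t x. 0 \<le> s \<Longrightarrow> s \<le> t \<Longrightarrow> t \<le> T \<Longrightarrow> norm (U t s x) \<le> KU * norm x"
    and KY: "\<And>s y. norm (Uapp T SY n s r y) \<le> KY * norm y"
  shows "norm (U t b (Uapp T S n b r (J g)) - U t a (Uapp T S n a r (J g)))
    \<le> KU * dist_AAn T J A n * (KY * norm g) * (b - a)"
proof -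
  define \<tau> where "\<tau> = grid T n m"
  have \<tau>: "\<tau> \<in> {0..T}" using grid_in_Icc[of T m n] T_pos m n by (simp add: \<tau>_def)
  have t: "t \<in> {0..T}" and a0: "0 \<le> a" and bt: "b \<le> t" and bS: "b \<le> grid T n (Suc m)"
    using rt a b by auto
  define y where "y = Uapp T SY n a r g"
  have frozen: "Uapp T S n s r (J g) = S \<tau> (s - a) (J y)" if "a \<le> s" "s \<le> b" for s
    using Uapp_within_grid_interval[where S = S, OF T_pos m a that(1) order_trans[OF that(2) bS]
        S_grid_zero[OF n]] Uapp_J[OF n]
    by (simp add: \<tau>_def y_def)
  let ?\<phi> = "\<lambda>s. U t s (S \<tau> (s - a) (J y))"
  have deriv: "(?\<phi> has_vector_derivative U t s (A s (S \<tau> (s - a) (J y)) - A \<tau> (S \<tau> (s - a) (J y))))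
      (at s within {a..b})" if "s \<in> {a..b}" for s
    by (rule U_frozen_orbit_derivative[OF t \<tau> a0 bt that])
  have "norm (?\<phi> b - ?\<phi> a) \<le> KU * dist_AAn T J A n * (KY * norm g) * (b - a)"
  proof (rule vector_derivative_bound_Icc[OF ab])
    show "continuous_on {a..b} ?\<phi>"
      using deriv has_vector_derivative_continuous continuous_on_eq_continuous_within by blast
    fix s assume s: "a < s" "s < b"
    then show "(?\<phi> has_vector_derivative U t s (A s (S \<tau> (s - a) (J y)) - A \<tau> (S \<tau> (s - a) (J y))))
        (at s within {a..b})"
      using deriv by simp
    let ?y = "Uapp T SY n s r g"
    have in_Y: "S \<tau> (s - a) (J y) = J ?y" using frozen[of s] Uapp_J[OF n] s by simp
    have "norm (U t s (A s (J ?y) - A \<tau> (J ?y))) \<le> KU * norm (A s (J ?y) - A \<tau> (J ?y))"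
      using KU(2) s a0 bt rt by simp
    also have "\<dots> \<le> KU * (dist_AAn T J A n * norm ?y)"
      using norm_A_frozen_le[OF n, of m s ?y] s a b rt KU(1) by (intro mult_left_mono) (auto simp: \<tau>_def)
    also have "\<dots> \<le> KU * (dist_AAn T J A n * (KY * norm g))"
      using KY KU(1) dist_AAn_nonneg by (intro mult_left_mono) auto
    finally show "norm (U t s (A s (S \<tau> (s - a) (J y)) - A \<tau> (S \<tau> (s - a) (J y))))
        \<le> KU * dist_AAn T J A n * (KY * norm g)"
      unfolding in_Y by (simp add: mult.assoc)
  qed
  then show ?thesis using frozen[of a] frozen[of b] ab by simp
qed

lemma Uapp_S_refl: "n > 0 \<Longrightarrow> Uapp T S n s s = id"
  by (rule Uapp_refl[where S = S, OF S_grid_zero])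

text \<open>Telescoping \<open>s \<mapsto> U(t, s) U\<^sub>n(s, r) g\<close> over the grid intervals met by \<open>[r, t]\<close>.\<close>

lemma evolution_estimate:
  assumes n: "n > 0" and rt: "0 \<le> r" "r \<le> t" "t \<le> T"
    and KU: "KU \<ge> 0" "\<And>s t x. 0 \<le> s \<Longrightarrow> s \<le> t \<Longrightarrow> t \<le> T \<Longrightarrow> norm (U t s x) \<le> KU * norm x"
    and KY: "\<And>s y. norm (Uapp T SY n s r y) \<le> KY * norm y"
  shows "norm (Uapp T S n t r (J g) - U t r (J g)) \<le> KU * dist_AAn T J A n * (KY * norm g) * (t - r)"
proof -
  let ?B = "KU * dist_AAn T J A n * (KY * norm g)"
  let ?\<phi> = "\<lambda>s. U t s (Uapp T S n s r (J g))"
  define c where "c k = max r (min t (grid T n k))" for k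
  have telescope: "norm (?\<phi> (c k) - ?\<phi> r) \<le> ?B * (c k - r)" if "k \<le> n" for k
    using that
  proof (induction k)
    case (Suc k)
    define a where "a = max r (grid T n k)"
    define b where "b = min t (grid T n (Suc k))"
    have "c k \<le> c (Suc k)" using grid_mono[of T k "Suc k" n] T_pos by (auto simp: c_def)
    show ?case
    proof (cases "c k = c (Suc k)")
      case False
      then have lt: "c k < c (Suc k)" using \<open>c k \<le> c (Suc k)\<close> by simp
      then have "grid T n k < t" by (auto simp: c_def)
      then have ca: "c k = a" and cb: "c (Suc k) = b" using lt by (auto simp: c_def a_def b_def)
      have "norm (?\<phi> b - ?\<phi> a) \<le> ?B * (b - a)"
        using evolution_grid_step[OF n _ rt a_def b_def _ KU KY] Suc.prems lt ca cb by simp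
      then show ?thesis
        using Suc norm_triangle_ineq[of "?\<phi> b - ?\<phi> a" "?\<phi> a - ?\<phi> r"] ca cb
        by (simp add: algebra_simps)
    qed (use Suc in simp)
  qed (use rt in \<open>simp add: c_def grid_def\<close>)
  moreover have "c n = t" using rt n by (simp add: c_def grid_def)
  moreover have "?\<phi> t = Uapp T S n t r (J g)" using U_refl rt by simp
  moreover have "?\<phi> r = U t r (J g)" using Uapp_S_refl[OF n] by simp
  ultimately show ?thesis using telescope[of n] by simp
qed

theorem evolution_approximation_bound:
  "\<exists>C\<ge>0. \<forall>n::nat. n \<ge> 1 \<longrightarrow> (\<forall>r t g. 0 \<le> r \<and> r < t \<and> t \<le> T \<longrightarrow>
     norm (U t r (J g) - Uapp T S n t r (J g)) \<le> C * norm g * (t - r) * dist_AAn T J A n)"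
proof -
  obtain KU where KU: "KU \<ge> 0" "\<forall>s t x. 0 \<le> s \<longrightarrow> s \<le> t \<longrightarrow> t \<le> T \<longrightarrow> norm (U t s x) \<le> KU * norm x"
    using U_bounded by blast
  obtain KY where KY: "KY \<ge> 0" "\<forall>n>0. \<forall>t s y. norm (Uapp T SY n t s y) \<le> KY * norm y"
    using Uapp_Y_bounded by blast
  have "norm (U t r (J g) - Uapp T S n t r (J g)) \<le> (KU * KY) * norm g * (t - r) * dist_AAn T J A n"
    if "n \<ge> 1" "0 \<le> r" "r < t" "t \<le> T" for n r t g
    using evolution_estimate[of n r t KU KY g] KU KY that
    by (simp add: norm_minus_commute algebra_simps)
  then show ?thesis using KU(1) KY(1) by (intro exI[of _ "KU * KY"]) auto
qed

lemma eventually_dist_AAn_le: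
  assumes "\<epsilon> > 0"
  shows "\<exists>N. \<forall>n\<ge>N. C * dist_AAn T J A n \<le> \<epsilon>"
proof -
  have "(\<lambda>n. C * dist_AAn T J A n) \<longlonglongrightarrow> 0"
    using tendsto_mult_right_zero[OF dist_AAn_tendsto_zero] .
  then obtain N where "\<forall>n\<ge>N. norm (C * dist_AAn T J A n - 0) < \<epsilon>"
    using assms unfolding LIMSEQ_iff by blast
  then show ?thesis by (intro exI[of _ N]) auto
qed

corollary evolution_approximation_local:
  "\<forall>\<epsilon>>0. \<exists>N. \<forall>n\<ge>N. \<forall>j\<in>{1..n}. \<forall>r t g. grid T n (j - 1) \<le> r \<and> r \<le> t \<and> t \<le> grid T n j \<longrightarrow>
     norm (U t r (J g) - Uapp T S n t r (J g)) \<le> \<epsilon> * (T / real n) * norm g"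
proof (intro allI impI)
  fix \<epsilon> :: real assume "\<epsilon> > 0"
  obtain C where "C \<ge> 0" and C: "\<forall>n::nat. n \<ge> 1 \<longrightarrow> (\<forall>r t g. 0 \<le> r \<and> r < t \<and> t \<le> T \<longrightarrow>
      norm (U t r (J g) - Uapp T S n t r (J g)) \<le> C * norm g * (t - r) * dist_AAn T J A n)"
    using evolution_approximation_bound by blast
  obtain N where N: "\<forall>n\<ge>N. C * dist_AAn T J A n \<le> \<epsilon>"
    using eventually_dist_AAn_le[OF \<open>\<epsilon> > 0\<close>] by blast
  show "\<exists>N. \<forall>n\<ge>N. \<forall>j\<in>{1..n}. \<forall>r t g. grid T n (j - 1) \<le> r \<and> r \<le> t \<and> t \<le> grid T n j \<longrightarrow>
      norm (U t r (J g) - Uapp T S n t r (J g)) \<le> \<epsilon> * (T / real n) * norm g"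
  proof (intro exI[of _ "max N 1"] allI impI ballI)
    fix n j r t g assume n: "max N 1 \<le> n" and j: "j \<in> {1..n}"
      and "grid T n (j - 1) \<le> r \<and> r \<le> t \<and> t \<le> grid T n j"
    then have rt: "grid T n (j - 1) \<le> r" "r \<le> t" "t \<le> grid T n j" by auto
    have "n > 0" using n by simp
    note bounds = grid_interval_bounds[OF T_pos \<open>n > 0\<close> j rt]
    show "norm (U t r (J g) - Uapp T S n t r (J g)) \<le> \<epsilon> * (T / real n) * norm g"
    proof (cases "r = t")
      case True
      then show ?thesis using U_refl Uapp_S_refl[OF \<open>n > 0\<close>] bounds \<open>\<epsilon> > 0\<close> T_pos by simp
    next
      case False
      then have "r < t" using rt by simp
      then have "norm (U t r (J g) - Uapp T S n t r (J g)) \<le> C * norm g * (t - r) * dist_AAn T J A n"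
        using C n bounds by simp
      also have "\<dots> = norm g * (t - r) * (C * dist_AAn T J A n)" by (simp add: algebra_simps)
      also have "\<dots> \<le> norm g * (T / real n) * \<epsilon>"
        using N n bounds rt \<open>C \<ge> 0\<close> dist_AAn_nonneg[of n] T_pos by (intro mult_mono) auto
      finally show ?thesis by (simp add: algebra_simps)
    qed
  qed
qed

end

theorem theorem4p1:
  fixes J :: "'y::banach \<Rightarrow> 'x::banach"
    and ciX :: "'x \<Rightarrow> 'x" and ciY :: "'y \<Rightarrow> 'y"
    and T :: real
    and D :: "real \<Rightarrow> 'x set" and A :: "real \<Rightarrow> 'x \<Rightarrow> 'x"
    and S :: "real \<Rightarrow> real \<Rightarrow> 'x \<Rightarrow> 'x"
    and U :: "real \<Rightarrow> real \<Rightarrow> 'x \<Rightarrow> 'x"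
  assumes cX: "complex_structure ciX" and cY: "complex_structure ciY"
    and J_clin: "bounded_linear J" "\<forall>y. J (ciY y) = ciX (J y)"
    and J_inj: "inj J" and J_dense: "closure (range J) = UNIV"
    and T_pos: "T > 0"
    and A_clin: "\<forall>t\<in>{0..T}. \<forall>x\<in>D t. ciX x \<in> D t \<and> A t (ciX x) = ciX (A t x)"
    and A_gen: "\<forall>t\<in>{0..T}. neg_generator (D t) (A t) (S t)"
    and H1: "stable T D A"
    and H2a: "\<forall>t\<in>{0..T}. admissible J (S t)"
    and H2b: "stable T (\<lambda>t. part_dom J (D t) (A t)) (\<lambda>t. part_op J (A t))"
    and H3a: "\<forall>t\<in>{0..T}. \<forall>y. J y \<in> D t"
    and H3b: "\<forall>t\<in>{0..T}. bounded_linear (\<lambda>y. A t (J y))"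
    and H3c: "\<forall>t\<in>{0..T}. ((\<lambda>s. onorm (\<lambda>y. A s (J y) - A t (J y))) \<longlongrightarrow> 0) (at t within {0..T})"
    and U_lin: "\<forall>s t. 0 \<le> s \<and> s \<le> t \<and> t \<le> T \<longrightarrow> bounded_linear (U t s)"
    and U_cont: "\<forall>x. continuous_on {(t, s). 0 \<le> s \<and> s \<le> t \<and> t \<le> T} (\<lambda>(t, s). U t s x)"
    and U_id: "\<forall>s\<in>{0..T}. U s s = id"
    and U_bound: "\<exists>M \<omega>. \<forall>s t. 0 \<le> s \<and> s \<le> t \<and> t \<le> T \<longrightarrow>
                     onorm (U t s) \<le> M * exp (\<omega> * (t - s))"
    and U_comp: "\<forall>r s t. 0 \<le> r \<and> r \<le> s \<and> s \<le> t \<and> t \<le> T \<longrightarrow> U t r = U t s \<circ> U s r"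
    and U_dt: "\<forall>s\<in>{0..T}. \<forall>g. ((\<lambda>t. U t s (J g)) has_vector_derivative (- A s (J g)))
                                  (at s within {s..T})"
    and U_ds: "\<forall>t\<in>{0..T}. \<forall>s\<in>{0..t}. \<forall>g. ((\<lambda>s'. U t s' (J g)) has_vector_derivative U t s (A s (J g)))
                                  (at s within {0..t})"
  shows "((\<lambda>n. dist_AAn T J A n) \<longlonglongrightarrow> 0)
    \<and> (\<exists>C. \<forall>n::nat. n \<ge> 1 \<longrightarrow> (\<forall>r t g. 0 \<le> r \<and> r < t \<and> t \<le> T \<longrightarrow>
           norm (U t r (J g) - Uapp T S n t r (J g)) \<le> C * norm g * (t - r) * dist_AAn T J A n))
    \<and> (\<forall>\<epsilon>>0. \<exists>N. \<forall>n\<ge>N. \<forall>j\<in>{1..n}. \<forall>r t g.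
           grid T n (j - 1) \<le> r \<and> r \<le> t \<and> t \<le> grid T n j \<longrightarrow>
           norm (U t r (J g) - Uapp T S n t r (J g)) \<le> \<epsilon> * (T / real n) * norm g)"
proof -
  interpret evolution_approximation J T D A S U
    by (rule evolution_approximation.intro[OF J_clin(1) J_inj T_pos A_gen H2a H2b H3a H3b H3c
          U_lin U_cont U_id U_bound U_ds])
  show ?thesis
    using dist_AAn_tendsto_zero evolution_approximation_bound evolution_approximation_local by blast
qed

end
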